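(* The following problem is decidable: given an ISRL $IS$ with model $M$, a formula $\varphi$ of the $A\bar BN$ fragment of EHS$^{+}$, and an interval $I$ of $M$, decide whether $M,I\models_B\varphi$.
   Context: **Regular expressions.** For a finite alphabet $X$, $RE_X$ is the set of regular expressions $e ::= \emptyset \mid \epsilon \mid s \mid e;e \mid e+e \mid e^*$ with $s\in X$. $L(e)$ denotes the standard language of $e$; $|e|$ is the number of symbols of $e$. **ISRL.** Fix agents $A=\{0,\dots,m\}$ and a finite set $\mathit{Var}$ of propositional variables. An ISRL is $IS=(\{L_i\},\{l_i^0\},\{ACT_i\},\{P_i\},\{t_i\},\lambda)$ where, for each $i\in A$: - $L_i$ is a finite set of local states and $l_i^0\in L_i$; - $ACT_i$ is a finite set of actions and $P_i:L_i\to 2^{ACT_i}$; - $t_i\subseteq L_i\times ACT\times L_i$, with $ACT=ACT_0\times\dots\times ACT_m$; - $\lambda:\mathit{Var}\to RE_G$, where $G=L_0\times\dots\times L_m$. $t^G((l_0,\dots,l_m),(l'_0,\dots,l'_m))$ holds iff some $(a_0,\dots,a_m)\in ACT$ has $a_i\in P_i(l_i)$ and $(l_i,(a_0,\dots,a_m),l'_i)\in t_i$ for all $i$. **Model of $IS$.** - States $S$ are the nonempty sequences $g_0\dots g_k$ with $g_0=(l_0^0,\dots,l_m^0)$ and $t^G(g_j,g_{j+1})$ for all $j<k$. - $t(g_0\dots g_k,g'_0\dots g'_l)$ iff $l=k+1$ and $g_j=g'_j$ for all $j\le k$. - $g_0\dots g_k\sim_i g'_0\dots g'_l$ iff $g_k,g'_l$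 have the same $i$-th component. - $\mathrm{g}(g_0\dots g_k)=g_k$. **Intervals.** An interval is a nonempty sequence $I=s_1\dots s_n$ of states with $t(s_j,s_{j+1})$; $|I|=n$, $\mathit{first}(I)=s_1$, $\mathit{last}(I)=s_n$, $\mathrm{g}(I)=\mathrm{g}(s_1)\dots\mathrm{g}(s_n)$, and $\mathit{pi}(I)$ iff $n=1$. **Indistinguishability.** $I=s_1\dots s_k\sim_i s'_1\dots s'_l$ iff $k=l$ and $s_j\sim_i s'_j$ for all $j$; $\sim_\Gamma$ is the transitive closure of $\bigcup_{i\in\Gamma}\sim_i$. **Relations used:** - $I R_A I'$ iff $\mathit{first}(I')=\mathit{last}(I)$; - $I R_{\bar B} I'$ iff $I'=II_1$ for some interval $I_1$; - $I R_N I'$ iff $t(\mathit{last}(I),\mathit{first}(I'))$. **$A\bar BN$ fragment of EHS$^{+}$.** Syntax: $\varphi::=\mathit{pi}\mid p\mid\neg\varphi\mid\varphi\wedge\varphi\mid K_i\varphi\mid C_\Gamma\varphi\mid\langle A\rangle\varphi\mid\langle\bar B\rangle\varphi\mid\langle N\rangle\varphi$, with $p\in\mathit{Var}$, $i\in A$, $\Gamma\subseteq A$. **Top-level sub-formulas.** A top-level sub-formula of $\varphi$ is a sub-formula of the form $X\psi$ with $X\in\{K_i,C_\Gamma,\langle A\rangle,\langle\bar B\rangle,\langle N\rangle\}$ that is not in the scope of any modality. **The bound $f^{IS}$.** Define recursively $$f^{IS}(\varphi)=\Big(2|G|^2\prod_{q\in\mathit{Var}}2^{|\lambda(q)|}\Big)\cdot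 2^{f^{IS}(\varphi_1)}\cdots 2^{f^{IS}(\varphi_k)},$$ where $X_1\varphi_1,\dots,X_k\varphi_k$ are the top-level sub-formulas of $\varphi$. **Bounded semantics $\models_B$:** - $M,I\models_B\mathit{pi}$ iff $|I|=1$; - $M,I\models_B p$ iff $\mathrm{g}(I)\in L(\lambda(p))$; - Boolean connectives as usual; - $M,I\models_B K_i\varphi$ iff $M,I'\models_B\varphi$ for all $I'\sim_i I$; - $M,I\models_B C_\Gamma\varphi$ iff $M,I'\models_B\varphi$ for all $I'\sim_\Gamma I$; - for $X\in\{A,\bar B,N\}$: $M,I\models_B\langle X\rangle\varphi$ iff there is an interval $I'$ with $|I'|\le|I|+f^{IS}(\varphi)$, $I R_X I'$ and $M,I'\models_B\varphi$. *)

theory Defs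
  imports Main "HOL-Library.Nat_Bijection"
begin

section \<open>Model of computation: Kleene partial recursive functions on nat\<close>

datatype recf = Zr | Sc | Id nat | Cn recf "recf list" | Pr recf recf | Mn recf

inductive evals :: "recf \<Rightarrow> nat list \<Rightarrow> nat \<Rightarrow> bool" where
  ev_Zr: "evals Zr xs 0"
| ev_Sc: "evals Sc (x # xs) (Suc x)"
| ev_Id: "k < length xs \<Longrightarrow> evals (Id k) xs (xs ! k)"
| ev_Cn: "list_all2 (\<lambda>g y. evals g xs y) gs ys \<Longrightarrow> evals f ys z \<Longrightarrow> evals (Cn f gs) xs z"
| ev_Pr0: "evals f xs y \<Longrightarrow> evals (Pr f g) (0 # xs) y"
| ev_PrS: "evals (Pr f g) (x # xs) r \<Longrightarrow> evals g (x # r # xs) y \<Longrightarrow> evals (Pr f g) (Suc x # xs) y"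
| ev_Mn: "evals f (y # xs) 0 \<Longrightarrow> (\<forall>z<y. \<exists>v. evals f (z # xs) v \<and> 0 < v) \<Longrightarrow> evals (Mn f) xs y"

datatype 'a rexp = RZero | ROne | RAtom 'a | RTimes "'a rexp" "'a rexp" | RPlus "'a rexp" "'a rexp"
  | RStar "'a rexp"

fun lang :: "'a rexp \<Rightarrow> 'a list set" where
  "lang RZero = {}"
| "lang ROne = {[]}"
| "lang (RAtom a) = {[a]}"
| "lang (RTimes e1 e2) = {u @ v | u v. u \<in> lang e1 \<and> v \<in> lang e2}"
| "lang (RPlus e1 e2) = lang e1 \<union> lang e2"
| "lang (RStar e) = {concat ws | ws. \<forall>w\<in>set ws. w \<in> lang e}"

fun rsize :: "'a rexp \<Rightarrow> nat" where
  "rsize RZero = 1"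
| "rsize ROne = 1"
| "rsize (RAtom a) = 1"
| "rsize (RTimes e1 e2) = rsize e1 + rsize e2 + 1"
| "rsize (RPlus e1 e2) = rsize e1 + rsize e2 + 1"
| "rsize (RStar e) = rsize e + 1"

fun ratoms :: "'a rexp \<Rightarrow> 'a set" where
  "ratoms RZero = {}"
| "ratoms ROne = {}"
| "ratoms (RAtom a) = {a}"
| "ratoms (RTimes e1 e2) = ratoms e1 \<union> ratoms e2"
| "ratoms (RPlus e1 e2) = ratoms e1 \<union> ratoms e2"
| "ratoms (RStar e) = ratoms e"

section \<open>Interpreted systems with regular labelling (finite, concrete representation)\<close>

text \<open>Agents are 0..nag; agent i has local states {0..<locs!i}, initial state init!i,
  actions {0..<acts!i}, protocol prot!i!l (list of allowed actions in local state l),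
  local transition relation trans!i (triples (l, joint action, l')).
  Global states are lists of local states of length nag+1.
  Propositional variables are 0..<length lam, labelled by lam!q :: global-state regular expression.\<close>
record isrl =
  nag :: nat
  locs :: "nat list"
  init :: "nat list"
  acts :: "nat list"
  prot :: "nat list list list"
  trans :: "(nat \<times> nat list \<times> nat) list list"
  lam :: "nat list rexp list"

definition gstates :: "isrl \<Rightarrow> nat list set" where
  "gstates IS = {g. length g = Suc (nag IS) \<and> (\<forall>i\<le>nag IS. g ! i < locs IS ! i)}"

definition jactions :: "isrl \<Rightarrow> nat list set" where
  "jactions IS = {a. length a = Suc (nag IS) \<and> (\<forall>i\<le>nag IS. a ! i < acts IS ! i)}"

definition wf_isrl :: "isrl \<Rightarrow> bool" where
  "wf_isrl IS \<longleftrightarrow>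
     length (locs IS) = Suc (nag IS) \<and> length (init IS) = Suc (nag IS) \<and>
     length (acts IS) = Suc (nag IS) \<and> length (prot IS) = Suc (nag IS) \<and>
     length (trans IS) = Suc (nag IS) \<and>
     (\<forall>i\<le>nag IS. init IS ! i < locs IS ! i \<and>
        length (prot IS ! i) = locs IS ! i \<and>
        (\<forall>l < locs IS ! i. \<forall>a\<in>set (prot IS ! i ! l). a < acts IS ! i) \<and>
        (\<forall>(l, a, l')\<in>set (trans IS ! i). l < locs IS ! i \<and> l' < locs IS ! i \<and> a \<in> jactions IS)) \<and>
     (\<forall>q<length (lam IS). ratoms (lam IS ! q) \<subseteq> gstates IS)"

definition tG :: "isrl \<Rightarrow> nat list \<Rightarrow> nat list \<Rightarrow> bool" where
  "tG IS g g' \<longleftrightarrow> g \<in> gstates IS \<and> g' \<in> gstates IS \<and>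
     (\<exists>a\<in>jactions IS. \<forall>i\<le>nag IS. a ! i \<in> set (prot IS ! i ! (g ! i)) \<and>
        (g ! i, a, g' ! i) \<in> set (trans IS ! i))"

text \<open>States of the model: nonempty runs from the initial global state.\<close>
definition isState :: "isrl \<Rightarrow> nat list list \<Rightarrow> bool" where
  "isState IS s \<longleftrightarrow> s \<noteq> [] \<and> hd s = init IS \<and> (\<forall>j. Suc j < length s \<longrightarrow> tG IS (s ! j) (s ! Suc j))"

definition tr :: "isrl \<Rightarrow> nat list list \<Rightarrow> nat list list \<Rightarrow> bool" where
  "tr IS s s' \<longleftrightarrow> isState IS s \<and> isState IS s' \<and> length s' = Suc (length s) \<and> take (length s) s' = s"

definition simS :: "isrl \<Rightarrow> nat \<Rightarrow> nat list list \<Rightarrow> nat list list \<Rightarrow> bool" where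
  "simS IS i s s' \<longleftrightarrow> isState IS s \<and> isState IS s' \<and> last s ! i = last s' ! i"

definition isInterval :: "isrl \<Rightarrow> nat list list list \<Rightarrow> bool" where
  "isInterval IS I \<longleftrightarrow> I \<noteq> [] \<and> (\<forall>s\<in>set I. isState IS s) \<and>
     (\<forall>j. Suc j < length I \<longrightarrow> tr IS (I ! j) (I ! Suc j))"

definition simI :: "isrl \<Rightarrow> nat \<Rightarrow> nat list list list \<Rightarrow> nat list list list \<Rightarrow> bool" where
  "simI IS i I I' \<longleftrightarrow> isInterval IS I \<and> isInterval IS I' \<and> length I = length I' \<and>
     (\<forall>j<length I. simS IS i (I ! j) (I' ! j))"

definition simC :: "isrl \<Rightarrow> nat set \<Rightarrow> nat list list list \<Rightarrow> nat list list list \<Rightarrow> bool" where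
  "simC IS \<Gamma> = tranclp (\<lambda>I I'. \<exists>i\<in>\<Gamma>. simI IS i I I')"

definition gseq :: "nat list list list \<Rightarrow> nat list list" where
  "gseq I = map last I"

section \<open>The A Bbar N fragment of EHS+\<close>

datatype form = Pi | Prop nat | Neg form | And form form | K nat form | C "nat list" form
  | DiaA form | DiaBbar form | DiaN form

fun wf_form :: "isrl \<Rightarrow> form \<Rightarrow> bool" where
  "wf_form IS Pi = True"
| "wf_form IS (Prop p) = (p < length (lam IS))"
| "wf_form IS (Neg a) = wf_form IS a"
| "wf_form IS (And a b) = (wf_form IS a \<and> wf_form IS b)"
| "wf_form IS (K i a) = (i \<le> nag IS \<and> wf_form IS a)"
| "wf_form IS (C G a) = ((\<forall>i\<in>set G. i \<le> nag IS) \<and> wf_form IS a)"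
| "wf_form IS (DiaA a) = wf_form IS a"
| "wf_form IS (DiaBbar a) = wf_form IS a"
| "wf_form IS (DiaN a) = wf_form IS a"

text \<open>top-level sub-formulas (modal sub-formulas not in the scope of any modality)\<close>
fun tops :: "form \<Rightarrow> form list" where
  "tops Pi = []"
| "tops (Prop p) = []"
| "tops (Neg a) = tops a"
| "tops (And a b) = tops a @ tops b"
| "tops \<phi> = [\<phi>]"

fun marg :: "form \<Rightarrow> form" where
  "marg (K i a) = a"
| "marg (C G a) = a"
| "marg (DiaA a) = a"
| "marg (DiaBbar a) = a"
| "marg (DiaN a) = a"
| "marg \<phi> = \<phi>"

lemma tops_smaller: "\<chi> \<in> set (tops \<phi>) \<Longrightarrow> size (marg \<chi>) < size \<phi>"
  by (induction \<phi> rule: tops.induct) auto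

definition fbase :: "isrl \<Rightarrow> nat" where
  "fbase IS = 2 * card (gstates IS) ^ 2 * (\<Prod>q<length (lam IS). 2 ^ rsize (lam IS ! q))"

text \<open>f^IS(phi) = fbase * prod over the (distinct) top-level sub-formulas X psi of 2^(f^IS psi).
  Defined by recursion on a fuel parameter; fuel size phi suffices since the argument psi of a
  top-level sub-formula is strictly smaller than phi, and formulas of size 0 have no top-level
  sub-formulas.\<close>
primrec fIS_aux :: "nat \<Rightarrow> isrl \<Rightarrow> form \<Rightarrow> nat" where
  "fIS_aux 0 IS \<phi> = fbase IS"
| "fIS_aux (Suc n) IS \<phi> = fbase IS * prod_list (map (\<lambda>\<chi>. 2 ^ fIS_aux n IS (marg \<chi>)) (remdups (tops \<phi>)))"

definition fIS :: "isrl \<Rightarrow> form \<Rightarrow> nat" where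
  "fIS IS \<phi> = fIS_aux (size \<phi>) IS \<phi>"

lemma tops_size0: "size \<phi> = 0 \<Longrightarrow> tops \<phi> = []"
  by (cases \<phi>) auto

lemma fIS_aux_fuel:
  "size \<phi> \<le> n \<Longrightarrow> size \<phi> \<le> m \<Longrightarrow> fIS_aux n IS \<phi> = fIS_aux m IS \<phi>"
proof (induction n arbitrary: m \<phi>)
  case 0
  then show ?case by (cases m) (auto simp: tops_size0)
next
  case (Suc n)
  show ?case
  proof (cases m)
    case 0
    then show ?thesis using Suc.prems by (auto simp: tops_size0)
  next
    case (Suc m')
    have "\<And>\<chi>. \<chi> \<in> set (remdups (tops \<phi>)) \<Longrightarrow> fIS_aux n IS (marg \<chi>) = fIS_aux m' IS (marg \<chi>)"
      using Suc.IH Suc.prems \<open>m = Suc m'\<close> tops_smaller by (metis Suc_le_mono less_Suc_eq_le order.strict_trans2 set_remdups)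
    then have "map (\<lambda>\<chi>. (2::nat) ^ fIS_aux n IS (marg \<chi>)) (remdups (tops \<phi>)) =
               map (\<lambda>\<chi>. 2 ^ fIS_aux m' IS (marg \<chi>)) (remdups (tops \<phi>))"
      by (intro map_cong) auto
    then show ?thesis unfolding \<open>m = Suc m'\<close> fIS_aux.simps by (simp only:)
  qed
qed

lemma fIS_eq:
  "fIS IS \<phi> = fbase IS * prod_list (map (\<lambda>\<chi>. 2 ^ fIS IS (marg \<chi>)) (remdups (tops \<phi>)))"
proof (cases "size \<phi>")
  case 0
  then show ?thesis by (simp add: fIS_def tops_size0)
next
  case (Suc n)
  have "\<And>\<chi>. \<chi> \<in> set (remdups (tops \<phi>)) \<Longrightarrow> fIS_aux n IS (marg \<chi>) = fIS IS (marg \<chi>)"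
    unfolding fIS_def using Suc tops_smaller fIS_aux_fuel by (metis less_Suc_eq_le order_refl set_remdups)
  then have "map (\<lambda>\<chi>. (2::nat) ^ fIS_aux n IS (marg \<chi>)) (remdups (tops \<phi>)) =
             map (\<lambda>\<chi>. 2 ^ fIS IS (marg \<chi>)) (remdups (tops \<phi>))"
    by (intro map_cong) auto
  then show ?thesis unfolding fIS_def[of IS \<phi>] Suc fIS_aux.simps fIS_def[symmetric] by (simp only:)
qed

fun satB :: "isrl \<Rightarrow> nat list list list \<Rightarrow> form \<Rightarrow> bool" where
  "satB IS I Pi = (length I = 1)"
| "satB IS I (Prop p) = (gseq I \<in> lang (lam IS ! p))"
| "satB IS I (Neg a) = (\<not> satB IS I a)"
| "satB IS I (And a b) = (satB IS I a \<and> satB IS I b)"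
| "satB IS I (K i a) = (\<forall>I'. simI IS i I I' \<longrightarrow> satB IS I' a)"
| "satB IS I (C G a) = (\<forall>I'. simC IS (set G) I I' \<longrightarrow> satB IS I' a)"
| "satB IS I (DiaA a) = (\<exists>I'. isInterval IS I' \<and> length I' \<le> length I + fIS IS a \<and>
      hd I' = last I \<and> satB IS I' a)"
| "satB IS I (DiaBbar a) = (\<exists>I'. isInterval IS I' \<and> length I' \<le> length I + fIS IS a \<and>
      (\<exists>I1. isInterval IS I1 \<and> I' = I @ I1) \<and> satB IS I' a)"
| "satB IS I (DiaN a) = (\<exists>I'. isInterval IS I' \<and> length I' \<le> length I + fIS IS a \<and>
      tr IS (last I) (hd I') \<and> satB IS I' a)"

definition enc_list :: "('a \<Rightarrow> nat) \<Rightarrow> 'a list \<Rightarrow> nat" where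
  "enc_list e xs = list_encode (map e xs)"

fun enc_rexp :: "nat list rexp \<Rightarrow> nat" where
  "enc_rexp RZero = prod_encode (0, 0)"
| "enc_rexp ROne = prod_encode (1, 0)"
| "enc_rexp (RAtom g) = prod_encode (2, list_encode g)"
| "enc_rexp (RTimes a b) = prod_encode (3, prod_encode (enc_rexp a, enc_rexp b))"
| "enc_rexp (RPlus a b) = prod_encode (4, prod_encode (enc_rexp a, enc_rexp b))"
| "enc_rexp (RStar a) = prod_encode (5, enc_rexp a)"

fun enc_form :: "form \<Rightarrow> nat" where
  "enc_form Pi = prod_encode (0, 0)"
| "enc_form (Prop p) = prod_encode (1, p)"
| "enc_form (Neg a) = prod_encode (2, enc_form a)"
| "enc_form (And a b) = prod_encode (3, prod_encode (enc_form a, enc_form b))"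
| "enc_form (K i a) = prod_encode (4, prod_encode (i, enc_form a))"
| "enc_form (C G a) = prod_encode (5, prod_encode (list_encode G, enc_form a))"
| "enc_form (DiaA a) = prod_encode (6, enc_form a)"
| "enc_form (DiaBbar a) = prod_encode (7, enc_form a)"
| "enc_form (DiaN a) = prod_encode (8, enc_form a)"

definition enc_trip :: "nat \<times> nat list \<times> nat \<Rightarrow> nat" where
  "enc_trip x = (case x of (l, a, l') \<Rightarrow> prod_encode (l, prod_encode (list_encode a, l')))"

definition enc_isrl :: "isrl \<Rightarrow> nat" where
  "enc_isrl IS = list_encode
     [nag IS, list_encode (locs IS), list_encode (init IS), list_encode (acts IS),
      enc_list (enc_list list_encode) (prot IS),
      enc_list (enc_list enc_trip) (trans IS),
      enc_list enc_rexp (lam IS)]"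

definition enc_interval :: "nat list list list \<Rightarrow> nat" where
  "enc_interval I = enc_list (enc_list list_encode) I"

definition enc_inst :: "isrl \<Rightarrow> form \<Rightarrow> nat list list list \<Rightarrow> nat" where
  "enc_inst IS \<phi> I = list_encode [enc_isrl IS, enc_form \<phi>, enc_interval I]"

end

theory Submission
  imports Defs
begin

text \<open>
  Every quantifier in the bounded semantics can be bounded effectively. An interval enters the
  semantics only through its sequence of global states, and every chain of global states starting
  in a reachable one is the global-state sequence of an interval; so satisfaction can be evaluated
  on such sequences. The sequences quantified over by \<open>DiaA\<close>, \<open>DiaBbar\<close> and \<open>DiaN\<close> are at most
  \<open>fIS\<close> longer than the current one, and those related by \<open>K\<close> or \<open>C\<close> have the same length;
  hence evaluating \<open>\<phi>\<close> at \<open>I\<close> only involves sequences of bounded length, whose codes lie below an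
  explicit bound \<open>B\<close>. Reachability and the transitive closure underlying \<open>C\<close> are witnessed by
  paths of bounded length. Satisfaction is then a table indexed by codes of sub-formulas and codes
  of sequences up to \<open>B\<close>, filled by course-of-values recursion on formula codes. All of this is
  primitive recursive, and primitive recursive expressions compile into Kleene's recursive functions.
\<close>

section \<open>Primitive recursive expressions\<close>

primrec iter :: "(nat \<Rightarrow> nat \<Rightarrow> nat) \<Rightarrow> nat \<Rightarrow> nat \<Rightarrow> nat" where
  "iter f 0 r = r"
| "iter f (Suc n) r = f n (iter f n r)"

datatype pexp = V nat | Z | S pexp | R pexp pexp pexp | Call pexp "pexp list"

fun peval :: "pexp \<Rightarrow> nat list \<Rightarrow> nat" where
  "peval (V k) env = (if k < length env then env ! k else 0)"
| "peval Z env = 0"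
| "peval (S e) env = Suc (peval e env)"
| "peval (R t z s) env = iter (\<lambda>k r. peval s (k # r # env)) (peval t env) (peval z env)"
| "peval (Call f as) env = peval f (map (\<lambda>a. peval a env) as)"

fun compile :: "nat \<Rightarrow> pexp \<Rightarrow> recf" where
  "compile n (V k) = (if k < n then Id k else Zr)"
| "compile n Z = Zr"
| "compile n (S e) = Cn Sc [compile n e]"
| "compile n (R t z s) = Cn (Pr (compile n z) (compile (Suc (Suc n)) s)) (compile n t # map Id [0..<n])"
| "compile n (Call f as) = Cn (compile (length as) f) (map (compile n) as)"

lemma evals_Pr_iter:
  assumes "\<And>env. length env = n \<Longrightarrow> evals F env (peval z env)"
    and "\<And>env. length env = Suc (Suc n) \<Longrightarrow> evals G env (peval s env)"
    and "length env = n"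
  shows "evals (Pr F G) (m # env) (iter (\<lambda>k r. peval s (k # r # env)) m (peval z env))"
proof (induction m)
  case 0
  then show ?case using assms by (auto intro: evals.intros)
next
  case (Suc m)
  show ?case using evals.ev_PrS[OF Suc] assms(2)[of "m # _ # env"] assms(3) by simp
qed

lemma evals_compile: "length env = n \<Longrightarrow> evals (compile n e) env (peval e env)"
proof (induction e arbitrary: n env)
  case (R t z s)
  have args: "list_all2 (\<lambda>g y. evals g env y) (compile n t # map Id [0..<n]) (peval t env # env)"
    using R unfolding list_all2_conv_all_nth
    by (auto simp: nth_Cons split: nat.split intro: evals.intros)
  have "evals (Pr (compile n z) (compile (Suc (Suc n)) s)) (peval t env # env) (peval (R t z s) env)"
    using evals_Pr_iter[of n "compile n z" z "compile (Suc (Suc n)) s" s env] R by simp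
  then show ?case using evals.ev_Cn[OF args] by simp
next
  case (Call f as)
  have args: "list_all2 (\<lambda>g y. evals g env y) (map (compile n) as) (map (\<lambda>a. peval a env) as)"
    using Call by (auto simp: list_all2_conv_all_nth)
  have "evals (compile (length as) f) (map (\<lambda>a. peval a env) as) (peval f (map (\<lambda>a. peval a env) as))"
    using Call(1)[of "map (\<lambda>a. peval a env) as"] by simp
  then show ?case using evals.ev_Cn[OF args] by simp
qed (auto intro!: evals.intros)

section \<open>Arithmetic and Cantor pairing\<close>

definition pfst :: "nat \<Rightarrow> nat" where "pfst n = fst (prod_decode n)"
definition psnd :: "nat \<Rightarrow> nat" where "psnd n = snd (prod_decode n)"
definition npair :: "nat \<Rightarrow> nat \<Rightarrow> nat" where "npair a b = prod_encode (a, b)"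

lemma pfst_npair[simp]: "pfst (npair a b) = a" and psnd_npair[simp]: "psnd (npair a b) = b"
  by (simp_all add: pfst_def psnd_def npair_def)

definition ADD where "ADD = R (V 1) (V 0) (S (V 1))"
definition PRED where "PRED = R (V 0) Z (V 0)"
definition SUB where "SUB = R (V 1) (V 0) (Call PRED [V 1])"
definition MUL where "MUL = R (V 1) Z (Call ADD [V 1, V 2])"
definition IFZ where "IFZ = R (V 0) (V 1) (V 4)"
definition LEQ where "LEQ = Call IFZ [Call SUB [V 0, V 1], S Z, Z]"
definition TRI where "TRI = R (S (V 0)) Z (Call ADD [V 1, V 0])"
definition PAIR where "PAIR = Call ADD [Call TRI [Call ADD [V 0, V 1]], V 0]"

text \<open>For \<open>n = npair a b = triangle (a + b) + a\<close>, \<open>CNT\<close> recovers \<open>a + b\<close> as the number of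
  \<open>k < n\<close> with \<open>triangle (k + 1) \<le> n\<close>.\<close>
definition CNT where "CNT = R (V 0) Z (Call ADD [V 1, Call LEQ [Call TRI [S (V 0)], V 2]])"
definition FST where "FST = Call SUB [V 0, Call TRI [Call CNT [V 0]]]"
definition SND where "SND = Call SUB [Call CNT [V 0], Call FST [V 0]]"

lemma iter_add: "iter (\<lambda>k r. Suc r) n a = a + n" by (induction n) auto
lemma iter_pred: "iter (\<lambda>k r. k) n a = (if n = 0 then a else n - 1)" by (induction n) auto
lemma iter_sub: "iter (\<lambda>k r. r - Suc 0) n a = a - n" by (induction n) auto
lemma iter_mul: "iter (\<lambda>k r. r + a) n 0 = a * n" by (induction n) auto
lemma iter_const: "iter (\<lambda>k r. b) n a = (if n = 0 then a else b)" by (induction n) auto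
lemma iter_sum: "iter (\<lambda>k r. r + f k) n a = a + (\<Sum>k<n. f k)" by (induction n) auto
lemma iter_prod: "iter (\<lambda>k r. r * f k) n a = a * (\<Prod>k<n. f k)" by (induction n) auto
lemma iter_ex: "(c::nat) \<noteq> 0 \<Longrightarrow> (iter (\<lambda>k r. if P k then c else r) n 0 \<noteq> 0) = (\<exists>k<n. P k)"
  by (induction n) (auto simp: less_Suc_eq)

lemma ADD_ev[simp]: "peval ADD [a, b] = a + b" by (simp add: ADD_def iter_add)
lemma PRED_ev[simp]: "peval PRED [a] = a - 1" by (simp add: PRED_def iter_pred)
lemma SUB_ev[simp]: "peval SUB [a, b] = a - b" by (simp add: SUB_def iter_sub)
lemma MUL_ev[simp]: "peval MUL [a, b] = a * b" by (simp add: MUL_def iter_mul mult.commute)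
lemma IFZ_ev[simp]: "peval IFZ [c, a, b] = (if c = 0 then a else b)" by (simp add: IFZ_def iter_const)
lemma LEQ_ev[simp]: "peval LEQ [a, b] = (if a \<le> b then 1 else 0)" by (simp add: LEQ_def)

lemma TRI_ev[simp]: "peval TRI [n] = triangle n"
proof -
  have "peval TRI [n] = (\<Sum>k<Suc n. k)" by (simp add: TRI_def iter_sum)
  also have "\<dots> = triangle n" by (induction n) auto
  finally show ?thesis .
qed

lemma PAIR_ev[simp]: "peval PAIR [a, b] = npair a b" by (simp add: PAIR_def npair_def prod_encode_def)

lemma triangle_mono: "a \<le> b \<Longrightarrow> triangle a \<le> triangle b"
  by (induction b) (auto simp: le_Suc_eq)

lemma le_triangle: "n \<le> triangle n"
  by (induction n) auto

lemma sum_indicator_less: "s \<le> n \<Longrightarrow> (\<Sum>k<n. if k < s then 1 else 0) = (s::nat)"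
proof (induction n)
  case (Suc n)
  then show ?case by (cases "s = Suc n") auto
qed simp

lemma triangle_Suc_le_prod_encode_iff:
  "triangle (Suc k) \<le> prod_encode (a, b) \<longleftrightarrow> k < a + b"
proof
  assume "triangle (Suc k) \<le> prod_encode (a, b)"
  then have "triangle (Suc k) < triangle (Suc (a + b))" by (simp add: prod_encode_def)
  then show "k < a + b" using triangle_mono[of "Suc (a + b)" "Suc k"] by linarith
next
  assume "k < a + b"
  then have "triangle (Suc k) \<le> triangle (a + b)" by (intro triangle_mono) simp
  then show "triangle (Suc k) \<le> prod_encode (a, b)" by (simp add: prod_encode_def)
qed

lemma CNT_ev: "peval CNT [prod_encode (a, b)] = a + b"
proof -
  let ?n = "prod_encode (a, b)"
  have "a + b \<le> ?n" using le_triangle[of "a + b"] by (simp add: prod_encode_def)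
  have "peval CNT [?n] = (\<Sum>k<?n. if triangle (Suc k) \<le> ?n then 1 else 0)"
    by (simp add: CNT_def iter_sum)
  also have "\<dots> = (\<Sum>k<?n. if k < a + b then 1 else 0)"
    by (simp only: triangle_Suc_le_prod_encode_iff)
  also have "\<dots> = a + b" using \<open>a + b \<le> ?n\<close> by (rule sum_indicator_less)
  finally show ?thesis .
qed

lemma FST_ev[simp]: "peval FST [n] = pfst n" and SND_ev[simp]: "peval SND [n] = psnd n"
proof -
  obtain a b where n: "n = prod_encode (a, b)" by (metis prod_decode_inverse surj_pair)
  have "peval FST [n] = prod_encode (a, b) - triangle (a + b)" by (simp add: FST_def n CNT_ev)
  then show "peval FST [n] = pfst n" by (simp add: n pfst_def) (simp add: prod_encode_def)
  then show "peval SND [n] = psnd n" by (simp add: SND_def n CNT_ev pfst_def psnd_def)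
qed

section \<open>Computable functions and decidable predicates\<close>

definition computable :: "(nat \<Rightarrow> nat) \<Rightarrow> bool" where
  "computable f \<longleftrightarrow> (\<exists>P. \<forall>x. peval P [x] = f x)"

definition decidable :: "(nat \<Rightarrow> bool) \<Rightarrow> bool" where
  "decidable P \<longleftrightarrow> computable (\<lambda>x. if P x then 1 else 0)"

lemma peval_numeral: "peval ((S ^^ c) Z) env = c"
  by (induction c) auto

lemma computable_const: "computable (\<lambda>x. c)"
  unfolding computable_def by (rule exI[of _ "(S ^^ c) Z"]) (simp add: peval_numeral)

lemma computable_id: "computable (\<lambda>x. x)"
  unfolding computable_def by (rule exI[of _ "V 0"]) simp

lemma computable_comp: "computable h \<Longrightarrow> computable f \<Longrightarrow> computable (\<lambda>x. h (f x))"
proof -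
  assume "computable h" "computable f"
  then obtain P Q where "\<And>x. peval P [x] = h x" "\<And>x. peval Q [x] = f x"
    unfolding computable_def by blast
  then have "peval (Call P [Call Q [V 0]]) [x] = h (f x)" for x
    by simp
  then show ?thesis unfolding computable_def by blast
qed

lemma computable_by_prog1:
  "(\<And>a. peval P [a] = h a) \<Longrightarrow> computable f \<Longrightarrow> computable (\<lambda>x. h (f x))"
proof -
  assume P: "\<And>a. peval P [a] = h a" and "computable f"
  then obtain Q where "\<And>x. peval Q [x] = f x"
    unfolding computable_def by blast
  then have "peval (Call P [Call Q [V 0]]) [x] = h (f x)" for x
    by (simp add: P)
  then show ?thesis unfolding computable_def by blast
qed

lemma computable_by_prog2:
  "(\<And>a b. peval P [a, b] = h a b) \<Longrightarrow> computable f \<Longrightarrow> computable g \<Longrightarrow>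
   computable (\<lambda>x. h (f x) (g x))"
proof -
  assume P: "\<And>a b. peval P [a, b] = h a b" and "computable f" "computable g"
  then obtain Q1 Q2 where "\<And>x. peval Q1 [x] = f x" "\<And>x. peval Q2 [x] = g x"
    unfolding computable_def by blast
  then have "peval (Call P [Call Q1 [V 0], Call Q2 [V 0]]) [x] = h (f x) (g x)" for x
    by (simp add: P)
  then show ?thesis unfolding computable_def by blast
qed

lemma computable_add: "computable f \<Longrightarrow> computable g \<Longrightarrow> computable (\<lambda>x. f x + g x)"
  by (rule computable_by_prog2[OF ADD_ev])
lemma computable_sub: "computable f \<Longrightarrow> computable g \<Longrightarrow> computable (\<lambda>x. f x - g x)"
  by (rule computable_by_prog2[OF SUB_ev])
lemma computable_mul: "computable f \<Longrightarrow> computable g \<Longrightarrow> computable (\<lambda>x. f x * g x)"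
  by (rule computable_by_prog2[OF MUL_ev])
lemma computable_npair: "computable f \<Longrightarrow> computable g \<Longrightarrow> computable (\<lambda>x. npair (f x) (g x))"
  by (rule computable_by_prog2[OF PAIR_ev])
lemma computable_pfst: "computable f \<Longrightarrow> computable (\<lambda>x. pfst (f x))"
  by (rule computable_by_prog1[OF FST_ev])
lemma computable_psnd: "computable f \<Longrightarrow> computable (\<lambda>x. psnd (f x))"
  by (rule computable_by_prog1[OF SND_ev])
lemma computable_Suc: "computable f \<Longrightarrow> computable (\<lambda>x. Suc (f x))"
  using computable_add[OF _ computable_const[of 1]] by simp

lemma computable_if:
  "decidable P \<Longrightarrow> computable f \<Longrightarrow> computable g \<Longrightarrow> computable (\<lambda>x. if P x then f x else g x)"
proof -
  assume "decidable P" "computable f" "computable g"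
  then obtain Q0 Q1 Q2 where "\<And>x. peval Q0 [x] = (if P x then 1 else 0)"
    "\<And>x. peval Q1 [x] = f x" "\<And>x. peval Q2 [x] = g x"
    unfolding decidable_def computable_def by blast
  then have "peval (Call IFZ [Call Q0 [V 0], Call Q2 [V 0], Call Q1 [V 0]]) [x] =
      (if P x then f x else g x)" for x
    by simp
  then show ?thesis unfolding computable_def by blast
qed

lemma computable_iter:
  assumes "computable t" "computable z" "computable (\<lambda>p. s (pfst p) (pfst (psnd p)) (psnd (psnd p)))"
  shows "computable (\<lambda>x. iter (\<lambda>k r. s k r x) (t x) (z x))"
proof -
  obtain Pt Pz Ps where t: "\<And>x. peval Pt [x] = t x" and z: "\<And>x. peval Pz [x] = z x"
     and s: "\<And>p. peval Ps [p] = s (pfst p) (pfst (psnd p)) (psnd (psnd p))"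
    using assms unfolding computable_def by metis
  have "peval (R (Call Pt [V 0]) (Call Pz [V 0]) (Call Ps [Call PAIR [V 0, Call PAIR [V 1, V 2]]])) [x] =
    iter (\<lambda>k r. s k r x) (t x) (z x)" for x
    by (simp add: t z s)
  then show ?thesis unfolding computable_def by blast
qed

lemma computable_cong:
  assumes "computable f" "\<And>x. f x = g x"
  shows "computable g"
proof -
  have "f = g" using assms(2) by blast
  with assms(1) show ?thesis by simp
qed

lemma decidable_cong:
  assumes "decidable P" "\<And>x. P x = Q x"
  shows "decidable Q"
proof -
  have "P = Q" using assms(2) by blast
  with assms(1) show ?thesis by simp
qed

lemma decidable_comp: "decidable P \<Longrightarrow> computable f \<Longrightarrow> decidable (\<lambda>x. P (f x))"
  unfolding decidable_def by (rule computable_comp[of "\<lambda>y. if P y then 1 else 0"])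

lemma decidable_const: "decidable (\<lambda>x. Q)"
  unfolding decidable_def by (rule computable_const)

lemma decidable_le: "computable f \<Longrightarrow> computable g \<Longrightarrow> decidable (\<lambda>x. f x \<le> g x)"
  unfolding decidable_def by (rule computable_by_prog2[OF LEQ_ev])

lemma decidable_not: "decidable P \<Longrightarrow> decidable (\<lambda>x. \<not> P x)"
  unfolding decidable_def
  by (rule computable_cong[OF computable_if[of P "\<lambda>x. 0" "\<lambda>x. 1"]]) (auto simp: decidable_def computable_const)

lemma decidable_conj: "decidable P \<Longrightarrow> decidable Q \<Longrightarrow> decidable (\<lambda>x. P x \<and> Q x)"
  unfolding decidable_def
  by (rule computable_cong[OF computable_if[of P "\<lambda>x. if Q x then 1 else 0" "\<lambda>x. 0"]])
    (auto simp: decidable_def computable_const)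

lemma decidable_disj: "decidable P \<Longrightarrow> decidable Q \<Longrightarrow> decidable (\<lambda>x. P x \<or> Q x)"
  using decidable_not[OF decidable_conj[OF decidable_not decidable_not]] by simp

lemma decidable_imp: "decidable P \<Longrightarrow> decidable Q \<Longrightarrow> decidable (\<lambda>x. P x \<longrightarrow> Q x)"
  using decidable_disj[OF decidable_not] by simp

lemma decidable_eq: "computable f \<Longrightarrow> computable g \<Longrightarrow> decidable (\<lambda>x. f x = g x)"
  by (rule decidable_cong[OF decidable_conj[OF decidable_le decidable_le, of f g g f]]) auto

lemma decidable_less: "computable f \<Longrightarrow> computable g \<Longrightarrow> decidable (\<lambda>x. f x < g x)"
  by (rule decidable_cong[OF decidable_not[OF decidable_le, of g f]]) auto

text \<open>Bounded quantifiers, sums and products are iterations whose step function receives the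
  counter, the previous value and the argument paired as \<open>npair k (npair r x)\<close>.\<close>
lemma computable_skip_middle:
  "computable (\<lambda>p. f (pfst p) (psnd p)) \<Longrightarrow> computable (\<lambda>p. f (pfst p) (psnd (psnd p)))"
  using computable_comp[of "\<lambda>p. f (pfst p) (psnd p)" "\<lambda>p. npair (pfst p) (psnd (psnd p))"]
  by (simp add: computable_npair computable_pfst computable_psnd computable_id)

lemma decidable_ex:
  assumes "computable t" "decidable (\<lambda>p. P (pfst p) (psnd p))"
  shows "decidable (\<lambda>x. \<exists>k<t x. P k x)"
proof -
  have "decidable (\<lambda>p. P (pfst p) (psnd (psnd p)))"
    using assms(2) unfolding decidable_def by (rule computable_skip_middle)
  then have "computable (\<lambda>x. iter (\<lambda>k r. if P k x then 1 else r) (t x) 0)"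
    by (intro computable_iter[OF assms(1) computable_const] computable_if computable_const
        computable_pfst computable_psnd computable_id)
  then have "decidable (\<lambda>x. \<not> iter (\<lambda>k r. if P k x then 1 else r) (t x) 0 = 0)"
    by (intro decidable_eq computable_const decidable_not)
  then show ?thesis by (rule decidable_cong) (rule iter_ex, simp)
qed

lemma decidable_all:
  assumes "computable t" "decidable (\<lambda>p. P (pfst p) (psnd p))"
  shows "decidable (\<lambda>x. \<forall>k<t x. P k x)"
proof -
  have "decidable (\<lambda>x. \<not> (\<exists>k<t x. \<not> P k x))" by (intro decidable_not decidable_ex assms)
  then show ?thesis by (rule decidable_cong) simp
qed

lemma decidable_ex_le:
  assumes "computable t" "decidable (\<lambda>p. P (pfst p) (psnd p))"
  shows "decidable (\<lambda>x. \<exists>k\<le>t x. P k x)"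
  by (rule decidable_cong[OF decidable_ex[OF computable_Suc[OF assms(1)] assms(2)]])
    (simp add: less_Suc_eq_le)

lemma decidable_all_le:
  assumes "computable t" "decidable (\<lambda>p. P (pfst p) (psnd p))"
  shows "decidable (\<lambda>x. \<forall>k\<le>t x. P k x)"
  by (rule decidable_cong[OF decidable_all[OF computable_Suc[OF assms(1)] assms(2)]])
    (simp add: less_Suc_eq_le)

lemma computable_sum:
  assumes "computable t" "computable (\<lambda>p. f (pfst p) (psnd p))"
  shows "computable (\<lambda>x. \<Sum>k<t x. f k x)"
proof -
  have "computable (\<lambda>x. iter (\<lambda>k r. r + f k x) (t x) 0)"
    by (intro computable_iter[OF assms(1) computable_const] computable_add computable_pfst
        computable_psnd computable_id computable_skip_middle[OF assms(2)])
  then show ?thesis by (rule computable_cong) (simp add: iter_sum)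
qed

lemma computable_prod:
  assumes "computable t" "computable (\<lambda>p. f (pfst p) (psnd p))"
  shows "computable (\<lambda>x. \<Prod>k<t x. f k x)"
proof -
  have "computable (\<lambda>x. iter (\<lambda>k r. r * f k x) (t x) 1)"
    by (intro computable_iter[OF assms(1) computable_const] computable_mul computable_pfst
        computable_psnd computable_id computable_skip_middle[OF assms(2)])
  then show ?thesis by (rule computable_cong) (simp add: iter_prod)
qed

lemma computable_power: "computable f \<Longrightarrow> computable g \<Longrightarrow> computable (\<lambda>x. f x ^ g x)"
  using computable_prod[of g "\<lambda>k x. f x"] computable_comp[of f psnd]
  by (simp add: computable_psnd computable_id)

lemmas computable_intros = computable_const computable_id computable_add computable_sub
  computable_mul computable_npair computable_pfst computable_psnd computable_Suc computable_if
  computable_power computable_sum computable_prod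
  decidable_le decidable_const decidable_not decidable_conj decidable_disj decidable_imp
  decidable_eq decidable_less decidable_ex decidable_all decidable_ex_le decidable_all_le

lemma computable_lift2:
  "computable (\<lambda>p. H (pfst p) (psnd p)) \<Longrightarrow> computable f \<Longrightarrow> computable g \<Longrightarrow>
   computable (\<lambda>x. H (f x) (g x))"
  using computable_comp[of "\<lambda>p. H (pfst p) (psnd p)" "\<lambda>x. npair (f x) (g x)"]
  by (simp add: computable_npair)

lemma decidable_lift2:
  "decidable (\<lambda>p. H (pfst p) (psnd p)) \<Longrightarrow> computable f \<Longrightarrow> computable g \<Longrightarrow>
   decidable (\<lambda>x. H (f x) (g x))"
  using decidable_comp[of "\<lambda>p. H (pfst p) (psnd p)" "\<lambda>x. npair (f x) (g x)"]
  by (simp add: computable_npair)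

lemma decidable_lift3:
  "decidable (\<lambda>p. H (pfst p) (pfst (psnd p)) (psnd (psnd p))) \<Longrightarrow>
   computable f \<Longrightarrow> computable g \<Longrightarrow> computable h \<Longrightarrow> decidable (\<lambda>x. H (f x) (g x) (h x))"
  using decidable_comp[of "\<lambda>p. H (pfst p) (pfst (psnd p)) (psnd (psnd p))"
      "\<lambda>x. npair (f x) (npair (g x) (h x))"]
  by (simp add: computable_npair)

lemma decidable_lift4:
  "decidable (\<lambda>p. H (pfst p) (pfst (psnd p)) (pfst (psnd (psnd p))) (psnd (psnd (psnd p)))) \<Longrightarrow>
   computable f \<Longrightarrow> computable g \<Longrightarrow> computable h \<Longrightarrow> computable k \<Longrightarrow>
   decidable (\<lambda>x. H (f x) (g x) (h x) (k x))"
  using decidable_comp[of "\<lambda>p. H (pfst p) (pfst (psnd p)) (pfst (psnd (psnd p))) (psnd (psnd (psnd p)))"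
      "\<lambda>x. npair (f x) (npair (g x) (npair (h x) (k x)))"]
  by (simp add: computable_npair)

section \<open>Operations on codes of lists\<close>

text \<open>Since \<open>list_encode (x # xs) = Suc (prod_encode (x, list_encode xs))\<close>, the list operations
  below act on codes; the prefix \<open>c\<close> marks such an operation (and, later, a coded object).\<close>

definition ctl :: "nat \<Rightarrow> nat" where "ctl c = psnd (c - 1)"
definition chd :: "nat \<Rightarrow> nat" where "chd c = pfst (c - 1)"
definition ccons :: "nat \<Rightarrow> nat \<Rightarrow> nat" where "ccons a c = Suc (npair a c)"
definition cdrop :: "nat \<Rightarrow> nat \<Rightarrow> nat" where "cdrop k c = iter (\<lambda>j r. ctl r) k c"
definition cnth :: "nat \<Rightarrow> nat \<Rightarrow> nat" where "cnth c k = chd (cdrop k c)"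
definition clen :: "nat \<Rightarrow> nat" where "clen c = (\<Sum>k<c. if cdrop k c = 0 then 0 else 1)"
definition clast :: "nat \<Rightarrow> nat" where "clast c = cnth c (clen c - 1)"
definition ctab :: "(nat \<Rightarrow> nat) \<Rightarrow> nat \<Rightarrow> nat" where
  "ctab f n = iter (\<lambda>j acc. ccons (f (n - Suc j)) acc) n 0"
definition ctake :: "nat \<Rightarrow> nat \<Rightarrow> nat" where "ctake k c = ctab (\<lambda>j. cnth c j) k"

lemma ctl_list_encode[simp]: "ctl (list_encode xs) = list_encode (tl xs)"
proof -
  have "prod_decode 0 = (0, 0)" by (simp add: prod_decode_def prod_decode_aux.simps)
  then show ?thesis by (cases xs) (simp_all add: ctl_def psnd_def)
qed

lemma chd_list_encode[simp]: "chd (list_encode (x # xs)) = x"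
  by (simp add: chd_def pfst_def)

lemma ccons_list_encode[simp]: "ccons a (list_encode xs) = list_encode (a # xs)"
  by (simp add: ccons_def npair_def)

lemma cdrop_list_encode[simp]: "cdrop k (list_encode xs) = list_encode (drop k xs)"
  unfolding cdrop_def by (induction k) (simp_all add: drop_Suc tl_drop)

lemma cnth_list_encode[simp]: "k < length xs \<Longrightarrow> cnth (list_encode xs) k = xs ! k"
  unfolding cnth_def by (simp add: Cons_nth_drop_Suc[symmetric] chd_def pfst_def)

lemma length_le_list_encode: "length xs \<le> list_encode xs"
  by (induction xs) (auto simp: le_prod_encode_2 intro: le_trans)

lemma list_encode_eq_0[simp]: "list_encode xs = 0 \<longleftrightarrow> xs = []"
  by (cases xs) auto

lemma clen_list_encode[simp]: "clen (list_encode xs) = length xs"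
proof -
  have "clen (list_encode xs) = (\<Sum>k<list_encode xs. if k < length xs then 1 else 0)"
    unfolding clen_def by (intro sum.cong) auto
  also have "\<dots> = length xs" using length_le_list_encode by (rule sum_indicator_less)
  finally show ?thesis .
qed

lemma clast_list_encode[simp]: "xs \<noteq> [] \<Longrightarrow> clast (list_encode xs) = last xs"
  by (simp add: clast_def last_conv_nth)

lemma iter_ccons_list_encode:
  "m \<le> n \<Longrightarrow> iter (\<lambda>j acc. ccons (f (n - Suc j)) acc) m 0 = list_encode (map f [n - m..<n])"
proof (induction m)
  case (Suc m)
  then have "[n - Suc m..<n] = (n - Suc m) # [n - m..<n]"
    by (simp add: Suc_diff_Suc upt_conv_Cons)
  then show ?case using Suc by simp
qed simp

lemma ctab_eq_list_encode[simp]: "ctab f n = list_encode (map f [0..<n])"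
  unfolding ctab_def using iter_ccons_list_encode[of n n f] by simp

lemma cnth_ctab[simp]: "k < n \<Longrightarrow> cnth (ctab f n) k = f k"
  by simp

lemma ctake_list_encode[simp]: "k \<le> length xs \<Longrightarrow> ctake k (list_encode xs) = list_encode (take k xs)"
proof -
  assume "k \<le> length xs"
  then have "map (cnth (list_encode xs)) [0..<k] = take k xs" by (intro nth_equalityI) auto
  then show ?thesis unfolding ctake_def by simp
qed

lemma ex_less_clen_list_encode: "(\<exists>k<clen (list_encode xs). P (cnth (list_encode xs) k)) \<longleftrightarrow> (\<exists>x\<in>set xs. P x)"
  by (metis clen_list_encode cnth_list_encode in_set_conv_nth)

lemma prod_encode_mono: "a \<le> c \<Longrightarrow> b \<le> d \<Longrightarrow> prod_encode (a, b) \<le> prod_encode (c, d)"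
  unfolding prod_encode_def by (simp add: add_mono triangle_mono)

lemma list_encode_le_replicate:
  "length xs \<le> n \<Longrightarrow> \<forall>x\<in>set xs. x \<le> M \<Longrightarrow> list_encode xs \<le> list_encode (replicate n M)"
proof (induction xs arbitrary: n)
  case (Cons x xs)
  then obtain n' where "n = Suc n'" by (cases n) auto
  then show ?case using Cons by (simp add: prod_encode_mono)
qed simp

lemma computable_ctl: "computable f \<Longrightarrow> computable (\<lambda>x. ctl (f x))"
  unfolding ctl_def by (intro computable_intros)

lemma computable_chd: "computable f \<Longrightarrow> computable (\<lambda>x. chd (f x))"
  unfolding chd_def by (intro computable_intros)

lemma computable_ccons: "computable f \<Longrightarrow> computable g \<Longrightarrow> computable (\<lambda>x. ccons (f x) (g x))"
  unfolding ccons_def by (intro computable_intros)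

lemma computable_cdrop: "computable f \<Longrightarrow> computable g \<Longrightarrow> computable (\<lambda>x. cdrop (f x) (g x))"
  unfolding cdrop_def by (rule computable_iter) (assumption | intro computable_intros computable_ctl)+

lemma computable_cnth: "computable f \<Longrightarrow> computable g \<Longrightarrow> computable (\<lambda>x. cnth (f x) (g x))"
  unfolding cnth_def by (intro computable_chd computable_cdrop)

lemma computable_clen: assumes "computable f" shows "computable (\<lambda>x. clen (f x))"
  unfolding clen_def by (intro computable_intros computable_cdrop computable_comp[OF assms] assms)

lemma computable_clast: "computable f \<Longrightarrow> computable (\<lambda>x. clast (f x))"
  unfolding clast_def by (intro computable_intros computable_cnth computable_clen)

lemma computable_ctab:
  assumes n: "computable n" and F: "computable (\<lambda>p. F (pfst p) (psnd p))"
  shows "computable (\<lambda>x. ctab (\<lambda>j. F j x) (n x))"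
proof -
  have "computable (\<lambda>p. F (n (psnd (psnd p)) - Suc (pfst p)) (psnd (psnd p)))"
    using computable_comp[OF F, of "\<lambda>p. npair (n (psnd (psnd p)) - Suc (pfst p)) (psnd (psnd p))"]
    by (simp add: computable_intros computable_comp[OF n])
  then show ?thesis unfolding ctab_def
    by (intro computable_iter n computable_intros computable_ccons)
qed

lemma computable_ctake:
  assumes "computable f" "computable g"
  shows "computable (\<lambda>x. ctake (f x) (g x))"
  unfolding ctake_def
  by (intro computable_ctab computable_cnth computable_intros computable_comp[OF assms(2)] assms)

lemmas computable_list_intros = computable_intros computable_ctl computable_chd computable_ccons
  computable_cdrop computable_cnth computable_clen computable_clast computable_ctake computable_ctab

section \<open>Course-of-values recursion\<close>

text \<open>Each round recomputes the whole table \<open>[F T 0 x, \<dots>, F T N x]\<close> from the previous table \<open>T\<close>;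
  after \<open>z + 1\<close> rounds the entry \<open>z\<close> is correct for every \<open>z\<close> in a set \<open>G\<close> on which \<open>F\<close> only
  consults entries of \<open>G\<close> below \<open>z\<close>.\<close>
definition cov_tab :: "(nat \<Rightarrow> nat \<Rightarrow> nat \<Rightarrow> nat) \<Rightarrow> nat \<Rightarrow> nat \<Rightarrow> nat" where
  "cov_tab F N x = iter (\<lambda>k T. ctab (\<lambda>z. F T z x) (Suc N)) (Suc N) 0"

lemma cov_tab_correct:
  assumes step: "\<And>z T. z \<in> G \<Longrightarrow> z \<le> N \<Longrightarrow> (\<And>z'. z' \<in> G \<Longrightarrow> z' < z \<Longrightarrow> cnth T z' = h z') \<Longrightarrow>
      F T z x = h z"
    and "z \<in> G" "z \<le> N"
  shows "cnth (cov_tab F N x) z = h z"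
proof -
  let ?T = "\<lambda>k. iter (\<lambda>k T. ctab (\<lambda>z. F T z x) (Suc N)) k 0"
  have "\<forall>z\<in>G. z < k \<longrightarrow> z \<le> N \<longrightarrow> cnth (?T k) z = h z" for k
  proof (induction k)
    case (Suc k)
    show ?case
    proof (intro ballI impI)
      fix z assume z: "z \<in> G" "z < Suc k" "z \<le> N"
      then have "cnth (?T (Suc k)) z = F (?T k) z x" by (simp del: ctab_eq_list_encode)
      also have "\<dots> = h z" using z Suc.IH by (intro step) auto
      finally show "cnth (?T (Suc k)) z = h z" .
    qed
  qed simp
  then show ?thesis unfolding cov_tab_def using assms(2,3) le_imp_less_Suc by blast
qed

lemma computable_cov_tab:
  assumes F: "computable (\<lambda>p. F (pfst p) (pfst (psnd p)) (psnd (psnd p)))"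
    and N: "computable N" and X: "computable X"
  shows "computable (\<lambda>y. cov_tab F (N y) (X y))"
proof -
  have "computable (\<lambda>q. F (pfst (psnd (psnd q))) (pfst q) (X (psnd (psnd (psnd q)))))"
    using computable_comp[OF F,
        of "\<lambda>q. npair (pfst (psnd (psnd q))) (npair (pfst q) (X (psnd (psnd (psnd q)))))"]
    by (simp add: computable_intros computable_comp[OF X])
  then have "computable (\<lambda>p. ctab (\<lambda>z. F (pfst (psnd p)) z (X (psnd (psnd p)))) (Suc (N (psnd (psnd p)))))"
    by (intro computable_ctab computable_intros computable_comp[OF N])
  then show ?thesis unfolding cov_tab_def
    by (intro computable_iter computable_intros computable_comp[OF N])
qed

section \<open>Transitive closure through paths of bounded length\<close>

definition is_path :: "(nat \<Rightarrow> nat \<Rightarrow> bool) \<Rightarrow> nat list \<Rightarrow> nat \<Rightarrow> nat \<Rightarrow> bool" where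
  "is_path r xs u v \<longleftrightarrow> 2 \<le> length xs \<and> hd xs = u \<and> last xs = v \<and>
     (\<forall>j. Suc j < length xs \<longrightarrow> r (xs ! j) (xs ! Suc j))"

lemma tranclp_hd_last:
  assumes "Suc 0 < length xs" "\<forall>j. Suc j < length xs \<longrightarrow> r (xs ! j) (xs ! Suc j)"
  shows "r\<^sup>+\<^sup>+ (hd xs) (last xs)"
  using assms
proof (induction xs rule: induct_list012)
  case (3 a b ys)
  have "r a b" using "3.prems"(2) by force
  show ?case
  proof (cases ys)
    case Nil
    then show ?thesis using \<open>r a b\<close> by simp
  next
    case Cons
    have "\<forall>j. Suc j < length (b # ys) \<longrightarrow> r ((b # ys) ! j) ((b # ys) ! Suc j)"
      using "3.prems"(2) by (metis Suc_less_eq length_Cons nth_Cons_Suc)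
    then have "r\<^sup>+\<^sup>+ b (last (b # ys))" using "3.IH"(2) Cons by simp
    then show ?thesis using \<open>r a b\<close> by simp
  qed
qed auto

lemma is_path_tranclp: "is_path r xs u v \<Longrightarrow> r\<^sup>+\<^sup>+ u v"
  unfolding is_path_def using tranclp_hd_last[of xs r] by auto

lemma tranclp_short_path:
  assumes bnd: "\<And>u v. r u v \<Longrightarrow> u \<le> B \<and> v \<le> B" and t: "r\<^sup>+\<^sup>+ u v"
  shows "\<exists>xs. length xs \<le> Suc ((B + 1) * (B + 1)) \<and> (\<forall>x\<in>set xs. x \<le> B) \<and> is_path r xs u v"
proof -
  define Rs where "Rs = {(a, b). r a b}"
  have sub: "Rs \<subseteq> {..B} \<times> {..B}" using bnd by (auto simp: Rs_def)
  then have fin: "finite Rs" by (rule finite_subset) auto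
  have card: "card Rs \<le> (B + 1) * (B + 1)"
    using card_mono[OF _ sub] by (simp add: card_cartesian_product)
  have "(u, v) \<in> Rs\<^sup>+" using t unfolding Rs_def by (simp add: tranclp_unfold)
  then obtain n where n: "0 < n" "n \<le> card Rs" "(u, v) \<in> Rs ^^ n"
    using trancl_finite_eq_relpow[OF fin] by auto
  then obtain f where f: "f 0 = u" "f n = v" "\<forall>i<n. (f i, f (Suc i)) \<in> Rs"
    using relpow_fun_conv by metis
  define xs where "xs = map f [0..<Suc n]"
  have "f i \<le> B" if "i \<le> n" for i
  proof (cases i)
    case 0 then show ?thesis using f(3) n(1) bnd by (auto simp: Rs_def)
  next
    case (Suc j) then show ?thesis using f(3)[rule_format, of j] that bnd by (auto simp: Rs_def)
  qed
  then have "\<forall>x\<in>set xs. x \<le> B" by (auto simp: xs_def)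
  moreover have "length xs \<le> Suc ((B + 1) * (B + 1))" using n card by (simp add: xs_def)
  moreover have "is_path r xs u v" using f n unfolding is_path_def xs_def
    by (auto simp: Rs_def hd_map last_map nth_Cons' simp del: upt_Suc)
  ultimately show ?thesis by blast
qed

definition path_code_bound :: "nat \<Rightarrow> nat" where
  "path_code_bound B = list_encode (replicate (Suc ((B + 1) * (B + 1))) B)"

definition cpath :: "(nat \<Rightarrow> nat \<Rightarrow> bool) \<Rightarrow> nat \<Rightarrow> nat \<Rightarrow> nat \<Rightarrow> bool" where
  "cpath r p u v \<longleftrightarrow> 2 \<le> clen p \<and> cnth p 0 = u \<and> cnth p (clen p - 1) = v \<and>
     (\<forall>j<clen p - 1. r (cnth p j) (cnth p (Suc j)))"

lemma cpath_list_encode: "cpath r (list_encode xs) u v = is_path r xs u v"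
proof (cases "2 \<le> length xs")
  case True
  then have "xs \<noteq> []" by auto
  then show ?thesis using True by (auto simp: cpath_def is_path_def hd_conv_nth last_conv_nth)
qed (auto simp: cpath_def is_path_def)

lemma tranclp_iff_cpath:
  assumes "\<And>u v. r u v \<Longrightarrow> u \<le> B \<and> v \<le> B"
  shows "r\<^sup>+\<^sup>+ u v \<longleftrightarrow> (\<exists>p\<le>path_code_bound B. cpath r p u v)"
proof
  assume "r\<^sup>+\<^sup>+ u v"
  then obtain xs where xs: "length xs \<le> Suc ((B + 1) * (B + 1))" "\<forall>x\<in>set xs. x \<le> B" "is_path r xs u v"
    using tranclp_short_path[OF assms] by blast
  show "\<exists>p\<le>path_code_bound B. cpath r p u v"
    using list_encode_le_replicate[OF xs(1,2)] xs(3)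
    by (intro exI[of _ "list_encode xs"]) (simp add: cpath_list_encode path_code_bound_def)
next
  assume "\<exists>p\<le>path_code_bound B. cpath r p u v"
  then obtain p where "cpath r (list_encode (list_decode p)) u v" by auto
  then show "r\<^sup>+\<^sup>+ u v" unfolding cpath_list_encode by (rule is_path_tranclp)
qed

lemma computable_path_code_bound: "computable f \<Longrightarrow> computable (\<lambda>x. path_code_bound (f x))"
proof -
  assume "computable f"
  have "path_code_bound B = ctab (\<lambda>j. B) (Suc ((B + 1) * (B + 1)))" for B
    by (simp add: path_code_bound_def map_replicate_const)
  then show ?thesis
    by (simp only:) (intro computable_ctab computable_intros computable_comp[OF \<open>computable f\<close>])
qed

section \<open>Satisfaction on sequences of global states\<close>

definition gchain :: "isrl \<Rightarrow> nat list list \<Rightarrow> bool" where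
  "gchain IS gs \<longleftrightarrow> (\<forall>j. Suc j < length gs \<longrightarrow> tG IS (gs ! j) (gs ! Suc j))"

definition gvalid :: "isrl \<Rightarrow> nat list list \<Rightarrow> bool" where
  "gvalid IS gs \<longleftrightarrow> gs \<noteq> [] \<and> (tG IS)\<^sup>*\<^sup>* (init IS) (hd gs) \<and> gchain IS gs"

definition gsim :: "isrl \<Rightarrow> nat \<Rightarrow> nat list list \<Rightarrow> nat list list \<Rightarrow> bool" where
  "gsim IS i gs gs' \<longleftrightarrow> gvalid IS gs \<and> gvalid IS gs' \<and> length gs = length gs' \<and>
     (\<forall>j<length gs. gs ! j ! i = gs' ! j ! i)"

text \<open>The bounded semantics transported from intervals \<open>I\<close> to \<open>gseq I\<close>.\<close>
fun gsat :: "isrl \<Rightarrow> form \<Rightarrow> nat list list \<Rightarrow> bool" where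
  "gsat IS Pi gs = (length gs = 1)"
| "gsat IS (Prop p) gs = (gs \<in> lang (lam IS ! p))"
| "gsat IS (Neg a) gs = (\<not> gsat IS a gs)"
| "gsat IS (And a b) gs = (gsat IS a gs \<and> gsat IS b gs)"
| "gsat IS (K i a) gs = (\<forall>gs'. gsim IS i gs gs' \<longrightarrow> gsat IS a gs')"
| "gsat IS (C G a) gs = (\<forall>gs'. (\<lambda>x y. \<exists>i\<in>set G. gsim IS i x y)\<^sup>+\<^sup>+ gs gs' \<longrightarrow> gsat IS a gs')"
| "gsat IS (DiaA a) gs = (\<exists>gs'. gvalid IS gs' \<and> length gs' \<le> length gs + fIS IS a \<and>
      hd gs' = last gs \<and> gsat IS a gs')"
| "gsat IS (DiaBbar a) gs = (\<exists>gs'. gvalid IS gs' \<and> length gs' \<le> length gs + fIS IS a \<and>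
      length gs < length gs' \<and> take (length gs) gs' = gs \<and> gsat IS a gs')"
| "gsat IS (DiaN a) gs = (\<exists>gs'. gvalid IS gs' \<and> length gs' \<le> length gs + fIS IS a \<and>
      tG IS (last gs) (hd gs') \<and> gsat IS a gs')"

lemma gchain_Nil[simp]: "gchain IS []"
  by (simp add: gchain_def)

lemma gchain_Cons: "gchain IS (a # xs) \<longleftrightarrow> (xs = [] \<or> tG IS a (hd xs)) \<and> gchain IS xs"
  unfolding gchain_def by (cases xs) (auto simp: less_Suc_eq_0_disj)

lemma gchain_append:
  "gchain IS (xs @ ys) \<longleftrightarrow> gchain IS xs \<and> gchain IS ys \<and> (xs = [] \<or> ys = [] \<or> tG IS (last xs) (hd ys))"
  by (induction xs) (auto simp: gchain_Cons)

lemma gchain_take: "gchain IS xs \<Longrightarrow> gchain IS (take k xs)"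
  using gchain_append[of IS "take k xs" "drop k xs"] by simp

lemma gchain_rtranclp: "gchain IS xs \<Longrightarrow> xs \<noteq> [] \<Longrightarrow> (tG IS)\<^sup>*\<^sup>* (hd xs) (last xs)"
  by (induction xs) (auto simp: gchain_Cons intro: converse_rtranclp_into_rtranclp)

lemma isState_iff: "isState IS s \<longleftrightarrow> s \<noteq> [] \<and> hd s = init IS \<and> gchain IS s"
  by (simp add: isState_def gchain_def)

lemma isState_reaches_last: "isState IS s \<Longrightarrow> (tG IS)\<^sup>*\<^sup>* (init IS) (last s)"
  using gchain_rtranclp[of IS s] by (auto simp: isState_iff)

lemma isState_append:
  "isState IS s \<Longrightarrow> gchain IS (last s # xs) \<Longrightarrow> isState IS (s @ xs)"
  by (auto simp: isState_iff gchain_append gchain_Cons)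

lemma reachable_last_state: "(tG IS)\<^sup>*\<^sup>* (init IS) g \<Longrightarrow> \<exists>s. isState IS s \<and> last s = g"
proof (induction rule: rtranclp_induct)
  case base
  then show ?case by (intro exI[of _ "[init IS]"]) (simp add: isState_def)
next
  case (step y z)
  then obtain s where "isState IS s" "last s = y" by blast
  then have "isState IS (s @ [z])" using step by (intro isState_append) (simp_all add: gchain_Cons)
  then show ?case by auto
qed

lemma tr_snoc: "tr IS s s' \<Longrightarrow> \<exists>g. s' = s @ [g]"
proof -
  assume "tr IS s s'"
  then have len: "length s' = Suc (length s)" and s: "take (length s) s' = s" by (auto simp: tr_def)
  have "drop (length s) s' = [s' ! length s]" using len by (simp add: Cons_nth_drop_Suc[symmetric])
  then have "s' = s @ [s' ! length s]" using append_take_drop_id[of "length s" s'] s by simp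
  then show ?thesis ..
qed

lemma tr_tG: "tr IS s s' \<Longrightarrow> tG IS (last s) (last s')"
proof -
  assume tr: "tr IS s s'"
  then obtain g where s': "s' = s @ [g]" using tr_snoc by blast
  have "s \<noteq> []" "isState IS s'" using tr by (auto simp: tr_def isState_def)
  then show ?thesis by (simp add: s' isState_iff gchain_append)
qed

lemma gseq_length[simp]: "length (gseq I) = length I"
  by (simp add: gseq_def)

lemma gseq_append[simp]: "gseq (I @ J) = gseq I @ gseq J"
  by (simp add: gseq_def)

lemma gseq_eq_Nil_iff[simp]: "gseq I = [] \<longleftrightarrow> I = []"
  by (simp add: gseq_def)

lemma last_gseq: "I \<noteq> [] \<Longrightarrow> last (gseq I) = last (last I)"
  by (simp add: gseq_def last_map)

lemma hd_gseq: "I \<noteq> [] \<Longrightarrow> hd (gseq I) = last (hd I)"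
  by (simp add: gseq_def hd_map)

lemma interval_gvalid: "isInterval IS I \<Longrightarrow> gvalid IS (gseq I)"
proof -
  assume I: "isInterval IS I"
  then have "I \<noteq> []" "isState IS (hd I)" by (auto simp: isInterval_def)
  then have "(tG IS)\<^sup>*\<^sup>* (init IS) (hd (gseq I))" by (simp add: hd_gseq isState_reaches_last)
  moreover have "gchain IS (gseq I)"
    using I tr_tG unfolding gchain_def isInterval_def gseq_def by simp
  ultimately show ?thesis using \<open>I \<noteq> []\<close> by (simp add: gvalid_def gseq_def)
qed

definition growing_interval :: "nat list list \<Rightarrow> nat list list \<Rightarrow> nat list list list" where
  "growing_interval s xs = map (\<lambda>k. s @ take k xs) [0..<Suc (length xs)]"

lemma growing_interval_props:
  assumes s: "isState IS s" and c: "gchain IS (last s # xs)"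
  shows "isInterval IS (growing_interval s xs)" "gseq (growing_interval s xs) = last s # xs"
    "hd (growing_interval s xs) = s"
proof -
  have st: "isState IS (s @ take k xs)" for k
    using gchain_take[OF c, of "Suc k"] by (intro isState_append[OF s]) simp
  show "isInterval IS (growing_interval s xs)"
    unfolding isInterval_def growing_interval_def
  proof (intro conjI allI impI ballI)
    fix j assume "Suc j < length (map (\<lambda>k. s @ take k xs) [0..<Suc (length xs)])"
    then show "tr IS (map (\<lambda>k. s @ take k xs) [0..<Suc (length xs)] ! j)
        (map (\<lambda>k. s @ take k xs) [0..<Suc (length xs)] ! Suc j)"
      using st[of j] st[of "Suc j"] unfolding tr_def by (simp add: min_def del: upt_Suc)
  qed (use st in \<open>auto simp del: upt_Suc\<close>)
  have "s \<noteq> []" using s by (simp add: isState_def)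
  then have "last (s @ take k xs) = (last s # xs) ! k" if "k < Suc (length xs)" for k
    using that by (cases k) (simp_all add: take_Suc_conv_app_nth)
  then show "gseq (growing_interval s xs) = last s # xs"
    by (intro nth_equalityI) (auto simp: gseq_def growing_interval_def simp del: upt_Suc)
  show "hd (growing_interval s xs) = s" by (simp add: growing_interval_def hd_map del: upt_Suc)
qed

lemma interval_from_state:
  assumes "isState IS s" "gchain IS (last s # xs)"
  shows "\<exists>J. isInterval IS J \<and> gseq J = last s # xs \<and> hd J = s"
  using growing_interval_props[OF assms] by blast

lemma interval_after_state:
  assumes "isState IS s" "xs \<noteq> []" "gchain IS (last s # xs)"
  shows "\<exists>J. isInterval IS J \<and> gseq J = xs \<and> tr IS s (hd J)"
proof -
  obtain J0 where J0: "isInterval IS J0" "gseq J0 = last s # xs" "hd J0 = s"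
    using interval_from_state[OF assms(1,3)] by blast
  have "length J0 = Suc (length xs)" using arg_cong[OF J0(2), of length] by simp
  with assms(2) have len: "Suc 0 < length J0" by (cases xs) auto
  then obtain J where J0_eq: "J0 = s # J" "J \<noteq> []" using J0(3) by (cases J0) auto
  then have "isInterval IS J" using J0(1) by (auto simp: isInterval_def)
  moreover have "gseq J = xs" using J0(2) J0_eq by (simp add: gseq_def)
  moreover have "tr IS s (hd J)" using J0(1) J0_eq len by (force simp: isInterval_def hd_conv_nth)
  ultimately show ?thesis by blast
qed

lemma gvalid_interval_exists:
  assumes "gvalid IS gs"
  shows "\<exists>I. isInterval IS I \<and> gseq I = gs"
proof -
  have ne: "gs \<noteq> []" and "(tG IS)\<^sup>*\<^sup>* (init IS) (hd gs)" "gchain IS gs"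
    using assms by (auto simp: gvalid_def)
  then obtain s where "isState IS s" "last s = hd gs" using reachable_last_state by blast
  then show ?thesis using interval_from_state[of IS s "tl gs"] \<open>gchain IS gs\<close> ne by auto
qed

lemma interval_append:
  assumes I: "isInterval IS I" and J: "isInterval IS J" and t: "tr IS (last I) (hd J)"
  shows "isInterval IS (I @ J)"
proof -
  have "I \<noteq> []" "J \<noteq> []" using I J by (auto simp: isInterval_def)
  have "tr IS ((I @ J) ! j) ((I @ J) ! Suc j)" if j: "Suc j < length (I @ J)" for j
  proof (cases "Suc j < length I")
    case True then show ?thesis using I by (simp add: isInterval_def nth_append)
  next
    case False
    show ?thesis
    proof (cases "j < length I")
      case True
      then have "j = length I - 1" using False by simp
      then show ?thesis using t \<open>I \<noteq> []\<close> \<open>J \<noteq> []\<close> False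
        by (simp add: nth_append last_conv_nth hd_conv_nth)
    next
      case False
      then have "Suc (j - length I) < length J" using j by simp
      then have "tr IS (J ! (j - length I)) (J ! Suc (j - length I))" using J unfolding isInterval_def by blast
      then show ?thesis using False by (simp add: nth_append Suc_diff_le)
    qed
  qed
  then show ?thesis using I J unfolding isInterval_def by auto
qed

lemma simI_iff_gsim:
  "simI IS i I I' \<longleftrightarrow> isInterval IS I \<and> isInterval IS I' \<and> gsim IS i (gseq I) (gseq I')"
proof
  assume h: "simI IS i I I'"
  then have "isInterval IS I" "isInterval IS I'" by (auto simp: simI_def)
  then show "isInterval IS I \<and> isInterval IS I' \<and> gsim IS i (gseq I) (gseq I')"
    using h interval_gvalid by (auto simp: simI_def gsim_def simS_def gseq_def)
next
  assume h: "isInterval IS I \<and> isInterval IS I' \<and> gsim IS i (gseq I) (gseq I')"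
  then have "\<forall>j<length I. isState IS (I ! j) \<and> isState IS (I' ! j)"
    by (auto simp: isInterval_def gsim_def)
  then show "simI IS i I I'" using h by (auto simp: simI_def gsim_def simS_def gseq_def)
qed

lemma simC_gsim_tranclp:
  assumes "(\<lambda>I I'. \<exists>i\<in>G. simI IS i I I')\<^sup>+\<^sup>+ I I'"
  shows "(\<lambda>x y. \<exists>i\<in>G. gsim IS i x y)\<^sup>+\<^sup>+ (gseq I) (gseq I') \<and> isInterval IS I'"
  using assms
proof (induction rule: tranclp_induct)
  case (step y z)
  then have "(\<lambda>x y. \<exists>i\<in>G. gsim IS i x y) (gseq y) (gseq z)" "isInterval IS z"
    by (auto simp: simI_iff_gsim)
  then show ?case using step.IH by (auto intro: tranclp.trancl_into_trancl)
qed (auto simp: simI_iff_gsim)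

lemma gsim_tranclp_simC:
  assumes "(\<lambda>x y. \<exists>i\<in>G. gsim IS i x y)\<^sup>+\<^sup>+ (gseq I) gs'" "isInterval IS I"
  shows "\<exists>I'. (\<lambda>I I'. \<exists>i\<in>G. simI IS i I I')\<^sup>+\<^sup>+ I I' \<and> gseq I' = gs'"
  using assms(1)
proof (induction rule: tranclp_induct)
  case (base y)
  then obtain i where i: "i \<in> G" "gsim IS i (gseq I) y" by blast
  then obtain I' where "isInterval IS I'" "gseq I' = y"
    using gvalid_interval_exists unfolding gsim_def by blast
  then show ?case using i assms(2) by (auto simp: simI_iff_gsim)
next
  case (step y z)
  then obtain I1 where I1: "(\<lambda>I I'. \<exists>i\<in>G. simI IS i I I')\<^sup>+\<^sup>+ I I1" "gseq I1 = y" by blast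
  then have "isInterval IS I1" using assms(2)
    by (induction rule: tranclp_induct) (auto simp: simI_iff_gsim)
  obtain i where i: "i \<in> G" "gsim IS i y z" using step by blast
  then obtain I' where "isInterval IS I'" "gseq I' = z"
    using gvalid_interval_exists unfolding gsim_def by blast
  then have "(\<lambda>I I'. \<exists>i\<in>G. simI IS i I I') I1 I'"
    using i I1(2) \<open>isInterval IS I1\<close> by (auto simp: simI_iff_gsim)
  then show ?case using I1(1) \<open>gseq I' = z\<close> by (auto intro: tranclp.trancl_into_trancl)
qed

lemma all_simI_iff_all_gsim:
  assumes I: "isInterval IS I" and PQ: "\<And>J. isInterval IS J \<Longrightarrow> P J \<longleftrightarrow> Q (gseq J)"
  shows "(\<forall>I'. simI IS i I I' \<longrightarrow> P I') \<longleftrightarrow> (\<forall>gs'. gsim IS i (gseq I) gs' \<longrightarrow> Q gs')"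
proof
  assume h: "\<forall>I'. simI IS i I I' \<longrightarrow> P I'"
  show "\<forall>gs'. gsim IS i (gseq I) gs' \<longrightarrow> Q gs'"
  proof (intro allI impI)
    fix gs' assume g: "gsim IS i (gseq I) gs'"
    then obtain I' where "isInterval IS I'" "gseq I' = gs'"
      using gvalid_interval_exists unfolding gsim_def by blast
    then show "Q gs'" using h g I PQ by (auto simp: simI_iff_gsim)
  qed
qed (use PQ in \<open>auto simp: simI_iff_gsim\<close>)

lemma all_simC_iff_all_gsim_tranclp:
  assumes I: "isInterval IS I" and PQ: "\<And>J. isInterval IS J \<Longrightarrow> P J \<longleftrightarrow> Q (gseq J)"
  shows "(\<forall>I'. simC IS G I I' \<longrightarrow> P I') \<longleftrightarrow>
    (\<forall>gs'. (\<lambda>x y. \<exists>i\<in>G. gsim IS i x y)\<^sup>+\<^sup>+ (gseq I) gs' \<longrightarrow> Q gs')"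
proof
  assume h: "\<forall>I'. simC IS G I I' \<longrightarrow> P I'"
  show "\<forall>gs'. (\<lambda>x y. \<exists>i\<in>G. gsim IS i x y)\<^sup>+\<^sup>+ (gseq I) gs' \<longrightarrow> Q gs'"
  proof (intro allI impI)
    fix gs' assume "(\<lambda>x y. \<exists>i\<in>G. gsim IS i x y)\<^sup>+\<^sup>+ (gseq I) gs'"
    then obtain I' where I': "simC IS G I I'" "gseq I' = gs'"
      using gsim_tranclp_simC[OF _ I] unfolding simC_def by blast
    then have "isInterval IS I'" using simC_gsim_tranclp unfolding simC_def by blast
    then show "Q gs'" using h I' PQ by auto
  qed
qed (use PQ simC_gsim_tranclp in \<open>auto simp: simC_def\<close>)

lemma ex_interval_meeting_iff:
  assumes I: "isInterval IS I" and PQ: "\<And>J. isInterval IS J \<Longrightarrow> P J \<longleftrightarrow> Q (gseq J)"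
  shows "(\<exists>I'. isInterval IS I' \<and> length I' \<le> length I + n \<and> hd I' = last I \<and> P I') \<longleftrightarrow>
    (\<exists>gs'. gvalid IS gs' \<and> length gs' \<le> length (gseq I) + n \<and> hd gs' = last (gseq I) \<and> Q gs')"
proof
  assume "\<exists>I'. isInterval IS I' \<and> length I' \<le> length I + n \<and> hd I' = last I \<and> P I'"
  then obtain I' where I': "isInterval IS I'" "length I' \<le> length I + n" "hd I' = last I" "P I'"
    by blast
  then have "hd (gseq I') = last (gseq I)" using I by (simp add: hd_gseq last_gseq isInterval_def)
  then show "\<exists>gs'. gvalid IS gs' \<and> length gs' \<le> length (gseq I) + n \<and> hd gs' = last (gseq I) \<and> Q gs'"
    using I' PQ interval_gvalid by (intro exI[of _ "gseq I'"]) auto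
next
  assume "\<exists>gs'. gvalid IS gs' \<and> length gs' \<le> length (gseq I) + n \<and> hd gs' = last (gseq I) \<and> Q gs'"
  then obtain gs' where gs': "gvalid IS gs'" "length gs' \<le> length I + n" "hd gs' = last (gseq I)" "Q gs'"
    by auto
  have "I \<noteq> []" "isState IS (last I)" using I by (auto simp: isInterval_def)
  moreover have "gs' = last (last I) # tl gs'"
    using gs'(1,3) \<open>I \<noteq> []\<close> by (cases gs') (auto simp: gvalid_def last_gseq)
  ultimately obtain J where "isInterval IS J" "gseq J = gs'" "hd J = last I"
    using interval_from_state[of IS "last I" "tl gs'"] gs'(1) by (auto simp: gvalid_def)
  then show "\<exists>I'. isInterval IS I' \<and> length I' \<le> length I + n \<and> hd I' = last I \<and> P I'"
    using gs' PQ by (intro exI[of _ J]) (auto simp flip: gseq_length)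
qed

lemma ex_interval_extending_iff:
  assumes I: "isInterval IS I" and PQ: "\<And>J. isInterval IS J \<Longrightarrow> P J \<longleftrightarrow> Q (gseq J)"
  shows "(\<exists>I'. isInterval IS I' \<and> length I' \<le> length I + n \<and> (\<exists>I1. isInterval IS I1 \<and> I' = I @ I1) \<and> P I') \<longleftrightarrow>
    (\<exists>gs'. gvalid IS gs' \<and> length gs' \<le> length (gseq I) + n \<and> length (gseq I) < length gs' \<and>
       take (length (gseq I)) gs' = gseq I \<and> Q gs')"
proof
  assume "\<exists>I'. isInterval IS I' \<and> length I' \<le> length I + n \<and> (\<exists>I1. isInterval IS I1 \<and> I' = I @ I1) \<and> P I'"
  then obtain I1 where I1: "isInterval IS (I @ I1)" "length (I @ I1) \<le> length I + n"
      "isInterval IS I1" "P (I @ I1)"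
    by blast
  moreover have "I1 \<noteq> []" using \<open>isInterval IS I1\<close> by (simp add: isInterval_def)
  moreover note interval_gvalid[OF I1(1)]
  ultimately show "\<exists>gs'. gvalid IS gs' \<and> length gs' \<le> length (gseq I) + n \<and> length (gseq I) < length gs' \<and>
       take (length (gseq I)) gs' = gseq I \<and> Q gs'"
    using PQ by (intro exI[of _ "gseq (I @ I1)"]) auto
next
  assume "\<exists>gs'. gvalid IS gs' \<and> length gs' \<le> length (gseq I) + n \<and> length (gseq I) < length gs' \<and>
       take (length (gseq I)) gs' = gseq I \<and> Q gs'"
  then obtain gs' where gs': "gvalid IS gs'" "length gs' \<le> length I + n" "length I < length gs'"
      "take (length I) gs' = gseq I" "Q gs'"
    by auto
  define xs where "xs = drop (length I) gs'"
  have gs'_eq: "gs' = gseq I @ xs" using gs'(4) unfolding xs_def by (metis append_take_drop_id)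
  have "I \<noteq> []" "isState IS (last I)" using I by (auto simp: isInterval_def)
  moreover have "xs \<noteq> []" using gs'(3) by (simp add: xs_def)
  moreover have "gchain IS (last (last I) # xs)"
    using gs'(1) gs'_eq \<open>I \<noteq> []\<close> \<open>xs \<noteq> []\<close> by (simp add: gvalid_def gchain_append gchain_Cons last_gseq)
  ultimately obtain I1 where I1: "isInterval IS I1" "gseq I1 = xs" "tr IS (last I) (hd I1)"
    using interval_after_state by blast
  then have "isInterval IS (I @ I1)" using interval_append[OF I] by blast
  moreover have "gseq (I @ I1) = gs'" using I1 gs'_eq by simp
  ultimately show "\<exists>I'. isInterval IS I' \<and> length I' \<le> length I + n \<and> (\<exists>I1. isInterval IS I1 \<and> I' = I @ I1) \<and> P I'"
    using gs' PQ I1(1) by (intro exI[of _ "I @ I1"]) (auto simp flip: gseq_length)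
qed

lemma ex_interval_next_iff:
  assumes I: "isInterval IS I" and PQ: "\<And>J. isInterval IS J \<Longrightarrow> P J \<longleftrightarrow> Q (gseq J)"
  shows "(\<exists>I'. isInterval IS I' \<and> length I' \<le> length I + n \<and> tr IS (last I) (hd I') \<and> P I') \<longleftrightarrow>
    (\<exists>gs'. gvalid IS gs' \<and> length gs' \<le> length (gseq I) + n \<and> tG IS (last (gseq I)) (hd gs') \<and> Q gs')"
proof
  assume "\<exists>I'. isInterval IS I' \<and> length I' \<le> length I + n \<and> tr IS (last I) (hd I') \<and> P I'"
  then obtain I' where I': "isInterval IS I'" "length I' \<le> length I + n" "tr IS (last I) (hd I')" "P I'"
    by blast
  then have "tG IS (last (gseq I)) (hd (gseq I'))"
    using tr_tG[OF I'(3)] I by (simp add: hd_gseq last_gseq isInterval_def)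
  then show "\<exists>gs'. gvalid IS gs' \<and> length gs' \<le> length (gseq I) + n \<and> tG IS (last (gseq I)) (hd gs') \<and> Q gs'"
    using I' PQ interval_gvalid by (intro exI[of _ "gseq I'"]) auto
next
  assume "\<exists>gs'. gvalid IS gs' \<and> length gs' \<le> length (gseq I) + n \<and> tG IS (last (gseq I)) (hd gs') \<and> Q gs'"
  then obtain gs' where gs': "gvalid IS gs'" "length gs' \<le> length I + n" "tG IS (last (gseq I)) (hd gs')" "Q gs'"
    by auto
  have "I \<noteq> []" "isState IS (last I)" using I by (auto simp: isInterval_def)
  moreover have "gs' \<noteq> []" "gchain IS (last (last I) # gs')"
    using gs'(1,3) \<open>I \<noteq> []\<close> by (auto simp: gvalid_def gchain_Cons last_gseq)
  ultimately obtain J where "isInterval IS J" "gseq J = gs'" "tr IS (last I) (hd J)"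
    using interval_after_state by blast
  then show "\<exists>I'. isInterval IS I' \<and> length I' \<le> length I + n \<and> tr IS (last I) (hd I') \<and> P I'"
    using gs' PQ by (intro exI[of _ J]) (auto simp flip: gseq_length)
qed

lemma satB_eq_gsat: "isInterval IS I \<Longrightarrow> satB IS I \<phi> \<longleftrightarrow> gsat IS \<phi> (gseq I)"
proof (induction \<phi> arbitrary: I)
  case (K i a)
  show ?case using all_simI_iff_all_gsim[where P="\<lambda>J. satB IS J a" and Q="gsat IS a",
        OF K.prems K.IH] by simp
next
  case (C G a)
  show ?case using all_simC_iff_all_gsim_tranclp[where P="\<lambda>J. satB IS J a" and Q="gsat IS a",
        OF C.prems C.IH] by simp
next
  case (DiaA a)
  show ?case using ex_interval_meeting_iff[where P="\<lambda>J. satB IS J a" and Q="gsat IS a",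
        OF DiaA.prems DiaA.IH] by simp
next
  case (DiaBbar a)
  show ?case using ex_interval_extending_iff[where P="\<lambda>J. satB IS J a" and Q="gsat IS a",
        OF DiaBbar.prems DiaBbar.IH] by simp
next
  case (DiaN a)
  show ?case using ex_interval_next_iff[where P="\<lambda>J. satB IS J a" and Q="gsat IS a",
        OF DiaN.prems DiaN.IH] by simp
qed simp_all

section \<open>Restricting the quantifiers to codes below a bound\<close>

definition gcode :: "nat list list \<Rightarrow> nat" where "gcode gs = list_encode (map list_encode gs)"

text \<open>How much longer than the current sequence the sequences consulted in the evaluation of a
  formula can be.\<close>
fun lookahead :: "isrl \<Rightarrow> form \<Rightarrow> nat" where
  "lookahead IS Pi = 0"
| "lookahead IS (Prop p) = 0"
| "lookahead IS (Neg a) = lookahead IS a"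
| "lookahead IS (And a b) = max (lookahead IS a) (lookahead IS b)"
| "lookahead IS (K i a) = lookahead IS a"
| "lookahead IS (C G a) = lookahead IS a"
| "lookahead IS (DiaA a) = fIS IS a + lookahead IS a"
| "lookahead IS (DiaBbar a) = fIS IS a + lookahead IS a"
| "lookahead IS (DiaN a) = fIS IS a + lookahead IS a"

fun gsat_bounded :: "isrl \<Rightarrow> nat \<Rightarrow> form \<Rightarrow> nat list list \<Rightarrow> bool" where
  "gsat_bounded IS B Pi gs = (length gs = 1)"
| "gsat_bounded IS B (Prop p) gs = (gs \<in> lang (lam IS ! p))"
| "gsat_bounded IS B (Neg a) gs = (\<not> gsat_bounded IS B a gs)"
| "gsat_bounded IS B (And a b) gs = (gsat_bounded IS B a gs \<and> gsat_bounded IS B b gs)"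
| "gsat_bounded IS B (K i a) gs =
    (\<forall>gs'. gcode gs' \<le> B \<longrightarrow> gsim IS i gs gs' \<longrightarrow> gsat_bounded IS B a gs')"
| "gsat_bounded IS B (C G a) gs = (\<forall>gs'. gcode gs' \<le> B \<longrightarrow>
      (\<lambda>x y. gcode x \<le> B \<and> gcode y \<le> B \<and> (\<exists>i\<in>set G. gsim IS i x y))\<^sup>+\<^sup>+ gs gs' \<longrightarrow>
      gsat_bounded IS B a gs')"
| "gsat_bounded IS B (DiaA a) gs = (gs \<noteq> [] \<and> (\<exists>gs'. gcode gs' \<le> B \<and> gvalid IS gs' \<and>
      length gs' \<le> length gs + fIS IS a \<and> hd gs' = last gs \<and> gsat_bounded IS B a gs'))"
| "gsat_bounded IS B (DiaBbar a) gs = (gs \<noteq> [] \<and> (\<exists>gs'. gcode gs' \<le> B \<and> gvalid IS gs' \<and>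
      length gs' \<le> length gs + fIS IS a \<and> length gs < length gs' \<and> take (length gs) gs' = gs \<and>
      gsat_bounded IS B a gs'))"
| "gsat_bounded IS B (DiaN a) gs = (gs \<noteq> [] \<and> (\<exists>gs'. gcode gs' \<le> B \<and> gvalid IS gs' \<and>
      length gs' \<le> length gs + fIS IS a \<and> tG IS (last gs) (hd gs') \<and> gsat_bounded IS B a gs'))"

lemma tranclp_restrict_iff:
  assumes "P x" "\<And>y. r\<^sup>+\<^sup>+ x y \<Longrightarrow> P y"
  shows "(\<lambda>a b. P a \<and> P b \<and> r a b)\<^sup>+\<^sup>+ x y \<longleftrightarrow> r\<^sup>+\<^sup>+ x y"
proof
  assume "(\<lambda>a b. P a \<and> P b \<and> r a b)\<^sup>+\<^sup>+ x y"
  then show "r\<^sup>+\<^sup>+ x y" by (induction rule: tranclp_induct) (auto intro: tranclp.trancl_into_trancl)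
next
  assume "r\<^sup>+\<^sup>+ x y"
  then show "(\<lambda>a b. P a \<and> P b \<and> r a b)\<^sup>+\<^sup>+ x y"
  proof (induction rule: tranclp_induct)
    case (base y)
    then show ?case using assms by (auto intro: tranclp.r_into_trancl)
  next
    case (step y z)
    then have "P y" "P z" using assms(2) by (auto intro: tranclp.trancl_into_trancl)
    then show ?case using step by (auto intro: tranclp.trancl_into_trancl)
  qed
qed

lemma gsim_tranclp_gvalid:
  "(\<lambda>x y. \<exists>i\<in>G. gsim IS i x y)\<^sup>+\<^sup>+ gs gs' \<Longrightarrow> gvalid IS gs' \<and> length gs' = length gs"
  by (induction rule: tranclp_induct) (auto simp: gsim_def)

lemma gsat_bounded_eq_gsat:
  "gvalid IS gs \<Longrightarrow> (\<forall>gs'. gvalid IS gs' \<and> length gs' \<le> length gs + lookahead IS \<phi> \<longrightarrow> gcode gs' \<le> B) \<Longrightarrow>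
   gsat_bounded IS B \<phi> gs = gsat IS \<phi> gs"
proof (induction \<phi> arbitrary: gs)
  case (And a b)
  have "gsat_bounded IS B a gs = gsat IS a gs" "gsat_bounded IS B b gs = gsat IS b gs"
    using And.prems by (intro And.IH; auto)+
  then show ?case by simp
next
  case (K i a)
  have "gsat_bounded IS B a gs' = gsat IS a gs'" "gcode gs' \<le> B" if "gsim IS i gs gs'" for gs'
    using that K.prems by (auto simp: gsim_def intro!: K.IH)
  then show ?case by auto
next
  case (C G a)
  let ?r = "\<lambda>x y. \<exists>i\<in>set G. gsim IS i x y"
  have eq: "gsat_bounded IS B a gs' = gsat IS a gs'" and bound: "gcode gs' \<le> B" if "?r\<^sup>+\<^sup>+ gs gs'" for gs'
    using gsim_tranclp_gvalid[OF that] C.prems by (auto intro!: C.IH)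
  have "gcode gs \<le> B" using C.prems by auto
  then have "(\<lambda>x y. gcode x \<le> B \<and> gcode y \<le> B \<and> ?r x y)\<^sup>+\<^sup>+ gs gs' \<longleftrightarrow> ?r\<^sup>+\<^sup>+ gs gs'" for gs'
    using tranclp_restrict_iff[of "\<lambda>x. gcode x \<le> B" gs ?r] bound by blast
  then show ?case using eq bound by auto
next
  case (DiaA a)
  have "gsat_bounded IS B a gs' = gsat IS a gs' \<and> gcode gs' \<le> B"
    if "gvalid IS gs'" "length gs' \<le> length gs + fIS IS a" for gs'
    using that DiaA.prems by (auto intro!: DiaA.IH)
  then show ?case using DiaA.prems(1) by (auto simp: gvalid_def)
next
  case (DiaBbar a)
  have "gsat_bounded IS B a gs' = gsat IS a gs' \<and> gcode gs' \<le> B"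
    if "gvalid IS gs'" "length gs' \<le> length gs + fIS IS a" for gs'
    using that DiaBbar.prems by (auto intro!: DiaBbar.IH)
  then show ?case using DiaBbar.prems(1) by (auto simp: gvalid_def)
next
  case (DiaN a)
  have "gsat_bounded IS B a gs' = gsat IS a gs' \<and> gcode gs' \<le> B"
    if "gvalid IS gs'" "length gs' \<le> length gs + fIS IS a" for gs'
    using that DiaN.prems by (auto intro!: DiaN.IH)
  then show ?case using DiaN.prems(1) by (auto simp: gvalid_def)
qed auto

section \<open>Coded interpreted systems\<close>

lemma cnth_gcode: "j < length gs \<Longrightarrow> cnth (gcode gs) j = list_encode (gs ! j)"
  by (simp add: gcode_def)

lemma clen_gcode[simp]: "clen (gcode gs) = length gs"
  by (simp add: gcode_def)

lemma gcode_eq_0[simp]: "gcode gs = 0 \<longleftrightarrow> gs = []"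
  by (simp add: gcode_def)

lemma clast_gcode: "gs \<noteq> [] \<Longrightarrow> clast (gcode gs) = list_encode (last gs)"
  by (simp add: gcode_def last_map)

lemma cnth_gcode_0: "gs \<noteq> [] \<Longrightarrow> cnth (gcode gs) 0 = list_encode (hd gs)"
  by (simp add: cnth_gcode hd_conv_nth)

lemma ctake_gcode: "k \<le> length gs \<Longrightarrow> ctake k (gcode gs) = gcode (take k gs)"
  by (simp add: gcode_def take_map)

definition gdecode :: "nat \<Rightarrow> nat list list" where "gdecode c = map list_decode (list_decode c)"

lemma gcode_gdecode[simp]: "gcode (gdecode c) = c"
  by (simp add: gcode_def gdecode_def comp_def)

lemma gdecode_gcode[simp]: "gdecode (gcode gs) = gs"
  by (simp add: gcode_def gdecode_def comp_def)

lemma enc_isrl_list_encode: "enc_isrl IS = list_encode [nag IS, list_encode (locs IS),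
      list_encode (init IS), list_encode (acts IS),
      list_encode (map (\<lambda>pi. list_encode (map list_encode pi)) (prot IS)),
      list_encode (map (\<lambda>ti. list_encode (map enc_trip ti)) (trans IS)),
      list_encode (map enc_rexp (lam IS))]"
proof -
  have e: "enc_list f = (\<lambda>xs. list_encode (map f xs))" for f :: "'a \<Rightarrow> nat"
    by (simp add: enc_list_def fun_eq_iff)
  show ?thesis by (simp only: enc_isrl_def e)
qed

lemma enc_trip_npair: "enc_trip (l, a, l') = npair l (npair (list_encode a) l')"
  by (simp add: enc_trip_def npair_def)

lemma inj_enc_trip: "inj enc_trip"
  by (rule injI) (auto simp: enc_trip_def split: prod.splits dest: inj_onD[OF inj_list_encode])

definition cnag where "cnag cis = cnth cis 0"
definition clocs where "clocs cis = cnth cis 1"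
definition cinit where "cinit cis = cnth cis 2"
definition cacts where "cacts cis = cnth cis 3"
definition cprot where "cprot cis = cnth cis 4"
definition ctrans where "ctrans cis = cnth cis 5"
definition clam where "clam cis = cnth cis 6"

lemmas cisrl_defs = cnag_def clocs_def cinit_def cacts_def cprot_def ctrans_def clam_def

lemma cisrl_simps[simp]:
  "cnag (enc_isrl IS) = nag IS"
  "clocs (enc_isrl IS) = list_encode (locs IS)"
  "cinit (enc_isrl IS) = list_encode (init IS)"
  "cacts (enc_isrl IS) = list_encode (acts IS)"
  "cprot (enc_isrl IS) = list_encode (map (\<lambda>pi. list_encode (map list_encode pi)) (prot IS))"
  "ctrans (enc_isrl IS) = list_encode (map (\<lambda>ti. list_encode (map enc_trip ti)) (trans IS))"
  "clam (enc_isrl IS) = list_encode (map enc_rexp (lam IS))"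
  by (simp_all add: enc_isrl_list_encode cisrl_defs del: list_encode.simps)

definition cmem :: "nat \<Rightarrow> nat \<Rightarrow> bool" where "cmem v c \<longleftrightarrow> (\<exists>k<clen c. cnth c k = v)"

definition csum :: "nat \<Rightarrow> nat" where "csum c = (\<Sum>k<clen c. cnth c k)"

definition cgstate :: "nat \<Rightarrow> nat \<Rightarrow> bool" where
  "cgstate cis u \<longleftrightarrow> clen u = Suc (cnag cis) \<and> (\<forall>i<Suc (cnag cis). cnth u i < cnth (clocs cis) i)"

definition cjaction :: "nat \<Rightarrow> nat \<Rightarrow> bool" where
  "cjaction cis a \<longleftrightarrow> clen a = Suc (cnag cis) \<and> (\<forall>i<Suc (cnag cis). cnth a i < cnth (cacts cis) i)"

definition cgstate_bound :: "nat \<Rightarrow> nat" where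
  "cgstate_bound cis = ctab (\<lambda>j. csum (clocs cis)) (Suc (cnag cis))"

definition cjaction_bound :: "nat \<Rightarrow> nat" where
  "cjaction_bound cis = ctab (\<lambda>j. csum (cacts cis)) (Suc (cnag cis))"

definition ctG :: "nat \<Rightarrow> nat \<Rightarrow> nat \<Rightarrow> bool" where
  "ctG cis u v \<longleftrightarrow> cgstate cis u \<and> cgstate cis v \<and> (\<exists>a\<le>cjaction_bound cis. cjaction cis a \<and>
     (\<forall>i<Suc (cnag cis). cmem (cnth a i) (cnth (cnth (cprot cis) i) (cnth u i)) \<and>
        cmem (npair (cnth u i) (npair a (cnth v i))) (cnth (ctrans cis) i)))"

definition creach :: "nat \<Rightarrow> nat \<Rightarrow> bool" where
  "creach cis g \<longleftrightarrow> g = cinit cis \<or>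
     (\<exists>p\<le>path_code_bound (cgstate_bound cis). cpath (ctG cis) p (cinit cis) g)"

definition cgvalid :: "nat \<Rightarrow> nat \<Rightarrow> bool" where
  "cgvalid cis c \<longleftrightarrow> c \<noteq> 0 \<and> creach cis (cnth c 0) \<and>
     (\<forall>j<clen c - 1. ctG cis (cnth c j) (cnth c (Suc j)))"

definition cgsim :: "nat \<Rightarrow> nat \<Rightarrow> nat \<Rightarrow> nat \<Rightarrow> bool" where
  "cgsim cis i c c' \<longleftrightarrow> cgvalid cis c \<and> cgvalid cis c' \<and> clen c = clen c' \<and>
     (\<forall>j<clen c. cnth (cnth c j) i = cnth (cnth c' j) i)"

lemma cmem_list_encode[simp]: "cmem v (list_encode xs) \<longleftrightarrow> v \<in> set xs"
  unfolding cmem_def using ex_less_clen_list_encode[of xs "\<lambda>x. x = v"] by auto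

lemma csum_list_encode[simp]: "csum (list_encode xs) = sum_list xs"
  by (simp add: csum_def sum_list_sum_nth atLeast0LessThan)

lemma wf_isrlD:
  assumes "wf_isrl IS"
  shows "length (locs IS) = Suc (nag IS)" "length (init IS) = Suc (nag IS)"
     "length (acts IS) = Suc (nag IS)" "length (prot IS) = Suc (nag IS)"
     "length (trans IS) = Suc (nag IS)"
     "\<And>i. i \<le> nag IS \<Longrightarrow> init IS ! i < locs IS ! i"
     "\<And>i. i \<le> nag IS \<Longrightarrow> length (prot IS ! i) = locs IS ! i"
  using assms by (auto simp: wf_isrl_def)

lemma init_gstates: "wf_isrl IS \<Longrightarrow> init IS \<in> gstates IS"
  by (auto simp: gstates_def dest: wf_isrlD)

lemma cgstate_correct: "wf_isrl IS \<Longrightarrow> cgstate (enc_isrl IS) (list_encode g) \<longleftrightarrow> g \<in> gstates IS"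
  by (auto simp: cgstate_def gstates_def wf_isrlD less_Suc_eq_le)

lemma cjaction_correct: "wf_isrl IS \<Longrightarrow> cjaction (enc_isrl IS) (list_encode a) \<longleftrightarrow> a \<in> jactions IS"
  by (auto simp: cjaction_def jactions_def wf_isrlD less_Suc_eq_le)

lemma list_encode_le_sum_list_bound:
  assumes "length xs = length L" "\<forall>i<length L. xs ! i < L ! i"
  shows "list_encode xs \<le> list_encode (replicate (length L) (sum_list L))"
proof (rule list_encode_le_replicate)
  show "\<forall>x\<in>set xs. x \<le> sum_list L"
  proof
    fix x assume "x \<in> set xs"
    then obtain i where "i < length L" "x = xs ! i" using assms(1) by (auto simp: in_set_conv_nth)
    then show "x \<le> sum_list L" using assms(2) elem_le_sum_list[of i L] by fastforce
  qed
qed (use assms in simp)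

lemma gstates_code_le: "wf_isrl IS \<Longrightarrow> g \<in> gstates IS \<Longrightarrow> list_encode g \<le> cgstate_bound (enc_isrl IS)"
  using list_encode_le_sum_list_bound[of g "locs IS"]
  by (simp add: cgstate_bound_def gstates_def wf_isrlD less_Suc_eq_le map_replicate_const)

lemma jactions_code_le: "wf_isrl IS \<Longrightarrow> a \<in> jactions IS \<Longrightarrow> list_encode a \<le> cjaction_bound (enc_isrl IS)"
  using list_encode_le_sum_list_bound[of a "acts IS"]
  by (simp add: cjaction_bound_def jactions_def wf_isrlD less_Suc_eq_le map_replicate_const)

lemma ctG_agent_correct:
  assumes wf: "wf_isrl IS" and "g \<in> gstates IS" "g' \<in> gstates IS" "a \<in> jactions IS" "i \<le> nag IS"
  shows "cmem (cnth (list_encode a) i) (cnth (cnth (cprot (enc_isrl IS)) i) (cnth (list_encode g) i)) \<and>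
      cmem (npair (cnth (list_encode g) i) (npair (list_encode a) (cnth (list_encode g') i)))
        (cnth (ctrans (enc_isrl IS)) i)
    \<longleftrightarrow> a ! i \<in> set (prot IS ! i ! (g ! i)) \<and> (g ! i, a, g' ! i) \<in> set (trans IS ! i)"
proof -
  have "i < length g" "i < length g'" "i < length a" "i < length (prot IS)" "i < length (trans IS)"
    "g ! i < length (prot IS ! i)"
    using assms by (auto simp: gstates_def jactions_def wf_isrlD)
  then show ?thesis
    by (simp add: enc_trip_npair[symmetric] inj_image_mem_iff[OF inj_enc_trip])
qed

lemma ctG_correct:
  assumes wf: "wf_isrl IS"
  shows "ctG (enc_isrl IS) (list_encode g) (list_encode g') \<longleftrightarrow> tG IS g g'"
proof
  assume "ctG (enc_isrl IS) (list_encode g) (list_encode g')"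
  then obtain ac where gs: "g \<in> gstates IS" "g' \<in> gstates IS" and "cjaction (enc_isrl IS) ac"
    and agents: "\<forall>i<Suc (nag IS). cmem (cnth ac i) (cnth (cnth (cprot (enc_isrl IS)) i) (cnth (list_encode g) i)) \<and>
        cmem (npair (cnth (list_encode g) i) (npair ac (cnth (list_encode g') i))) (cnth (ctrans (enc_isrl IS)) i)"
    using wf by (auto simp: ctG_def cgstate_correct)
  moreover obtain a where "ac = list_encode a" by (metis list_decode_inverse)
  ultimately have "a \<in> jactions IS" using cjaction_correct[OF wf] by simp
  then show "tG IS g g'"
    using agents ctG_agent_correct[OF wf gs] \<open>ac = list_encode a\<close> by (auto simp: tG_def gs less_Suc_eq_le)
next
  assume "tG IS g g'"
  then obtain a where gs: "g \<in> gstates IS" "g' \<in> gstates IS" and a: "a \<in> jactions IS"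
    and "\<forall>i\<le>nag IS. a ! i \<in> set (prot IS ! i ! (g ! i)) \<and> (g ! i, a, g' ! i) \<in> set (trans IS ! i)"
    by (auto simp: tG_def)
  then show "ctG (enc_isrl IS) (list_encode g) (list_encode g')"
    using ctG_agent_correct[OF wf gs a] jactions_code_le[OF wf a] cjaction_correct[OF wf]
    unfolding ctG_def by (auto simp: cgstate_correct[OF wf] less_Suc_eq_le)
qed

lemma ctG_iff_tG: "wf_isrl IS \<Longrightarrow> ctG (enc_isrl IS) u v \<longleftrightarrow> tG IS (list_decode u) (list_decode v)"
  using ctG_correct[of IS "list_decode u" "list_decode v"] by simp

lemma ctG_code_le:
  assumes wf: "wf_isrl IS" and "ctG (enc_isrl IS) u v"
  shows "u \<le> cgstate_bound (enc_isrl IS) \<and> v \<le> cgstate_bound (enc_isrl IS)"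
proof -
  have "list_decode u \<in> gstates IS" "list_decode v \<in> gstates IS"
    using assms by (auto simp: ctG_iff_tG tG_def)
  then show ?thesis using gstates_code_le[OF wf] by (metis list_decode_inverse)
qed

lemma tranclp_transfer:
  assumes r: "\<And>u v. r' u v = r (d u) (d v)" and de: "\<And>x. d (e x) = x"
  shows "r'\<^sup>+\<^sup>+ (e a) (e b) \<longleftrightarrow> r\<^sup>+\<^sup>+ a b"
proof
  assume "r'\<^sup>+\<^sup>+ (e a) (e b)"
  then have "r\<^sup>+\<^sup>+ (d (e a)) (d (e b))"
    by (induction rule: tranclp_induct) (auto simp: r intro: tranclp.trancl_into_trancl)
  then show "r\<^sup>+\<^sup>+ a b" by (simp add: de)
next
  assume "r\<^sup>+\<^sup>+ a b"
  then show "r'\<^sup>+\<^sup>+ (e a) (e b)"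
    by (induction rule: tranclp_induct) (auto simp: r de intro: tranclp.trancl_into_trancl)
qed

lemma creach_correct:
  assumes wf: "wf_isrl IS"
  shows "creach (enc_isrl IS) (list_encode g) \<longleftrightarrow> (tG IS)\<^sup>*\<^sup>* (init IS) g"
proof -
  let ?c = "enc_isrl IS"
  have "(ctG ?c)\<^sup>+\<^sup>+ (list_encode (init IS)) (list_encode g) \<longleftrightarrow> (tG IS)\<^sup>+\<^sup>+ (init IS) g"
    by (rule tranclp_transfer[of _ "tG IS" list_decode]) (simp_all add: ctG_iff_tG[OF wf])
  moreover have "(ctG ?c)\<^sup>+\<^sup>+ (list_encode (init IS)) (list_encode g) \<longleftrightarrow>
      (\<exists>p\<le>path_code_bound (cgstate_bound ?c). cpath (ctG ?c) p (list_encode (init IS)) (list_encode g))"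
    by (rule tranclp_iff_cpath) (rule ctG_code_le[OF wf])
  ultimately show ?thesis
    using rtranclpD[of "tG IS" "init IS" g] tranclp_into_rtranclp[of "tG IS" "init IS" g]
    by (auto simp: creach_def list_encode_eq)
qed

lemma cgvalid_correct:
  assumes wf: "wf_isrl IS"
  shows "cgvalid (enc_isrl IS) (gcode gs) \<longleftrightarrow> gvalid IS gs"
proof (cases "gs = []")
  case False
  then have "creach (enc_isrl IS) (cnth (gcode gs) 0) \<longleftrightarrow> (tG IS)\<^sup>*\<^sup>* (init IS) (hd gs)"
    by (simp add: cnth_gcode_0 creach_correct[OF wf])
  moreover have "(\<forall>j<clen (gcode gs) - 1. ctG (enc_isrl IS) (cnth (gcode gs) j) (cnth (gcode gs) (Suc j)))
      \<longleftrightarrow> gchain IS gs"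
    by (auto simp: cnth_gcode ctG_correct[OF wf] gchain_def)
  ultimately show ?thesis using False by (simp add: cgvalid_def gvalid_def)
qed (simp add: cgvalid_def gvalid_def)

lemma gvalid_gstates:
  assumes wf: "wf_isrl IS" and v: "gvalid IS gs" and "j < length gs"
  shows "gs ! j \<in> gstates IS"
proof (cases j)
  case 0
  then have "(tG IS)\<^sup>*\<^sup>* (init IS) (gs ! j)" using v by (auto simp: gvalid_def hd_conv_nth)
  then show ?thesis using init_gstates[OF wf] by (cases rule: rtranclp.cases) (auto simp: tG_def)
next
  case (Suc k)
  then have "tG IS (gs ! k) (gs ! j)" using v \<open>j < length gs\<close> by (simp add: gvalid_def gchain_def)
  then show ?thesis by (simp add: tG_def)
qed

lemma cgsim_correct:
  assumes wf: "wf_isrl IS" and i: "i \<le> nag IS"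
  shows "cgsim (enc_isrl IS) i (gcode gs) (gcode gs') \<longleftrightarrow> gsim IS i gs gs'"
proof -
  have "cnth (cnth (gcode xs) j) i = xs ! j ! i" if "gvalid IS xs" "j < length xs" for xs j
    using gvalid_gstates[OF wf that] that(2) i by (simp add: cnth_gcode gstates_def)
  then show ?thesis by (auto simp: cgsim_def gsim_def cgvalid_correct[OF wf])
qed

lemma computable_csum: "computable f \<Longrightarrow> computable (\<lambda>x. csum (f x))"
  by (rule computable_comp[of csum]) (unfold csum_def, intro computable_list_intros
      computable_comp[OF computable_cnth] computable_pfst computable_psnd computable_id)

lemma decidable_cmem: "computable f \<Longrightarrow> computable g \<Longrightarrow> decidable (\<lambda>x. cmem (f x) (g x))"
  by (rule decidable_lift2[of cmem]) (unfold cmem_def, intro computable_list_intros)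

lemma decidable_ctG:
  "computable f \<Longrightarrow> computable g \<Longrightarrow> computable h \<Longrightarrow> decidable (\<lambda>x. ctG (f x) (g x) (h x))"
  by (rule decidable_lift3[of ctG])
    (unfold ctG_def cgstate_def cjaction_def cjaction_bound_def cisrl_defs,
      intro computable_list_intros computable_csum decidable_cmem)

lemma computable_cgstate_bound: "computable f \<Longrightarrow> computable (\<lambda>x. cgstate_bound (f x))"
  by (rule computable_comp[of cgstate_bound])
    (unfold cgstate_bound_def clocs_def cnag_def, intro computable_list_intros computable_csum)

lemma decidable_creach: "computable f \<Longrightarrow> computable g \<Longrightarrow> decidable (\<lambda>x. creach (f x) (g x))"
  by (rule decidable_lift2[of creach])
    (unfold creach_def cpath_def cinit_def, intro computable_list_intros decidable_ctG
      computable_path_code_bound computable_cgstate_bound)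

lemma decidable_cgvalid: "computable f \<Longrightarrow> computable g \<Longrightarrow> decidable (\<lambda>x. cgvalid (f x) (g x))"
  by (rule decidable_lift2[of cgvalid])
    (unfold cgvalid_def, intro computable_list_intros decidable_ctG decidable_creach)

lemma decidable_cgsim:
  "computable f \<Longrightarrow> computable g \<Longrightarrow> computable h \<Longrightarrow> computable k \<Longrightarrow>
   decidable (\<lambda>x. cgsim (f x) (g x) (h x) (k x))"
  by (rule decidable_lift4[of cgsim]) (unfold cgsim_def, intro computable_list_intros decidable_cgvalid)

lemmas computable_isrl_intros = computable_list_intros computable_csum decidable_cmem decidable_ctG
  computable_path_code_bound computable_cgstate_bound decidable_creach decidable_cgvalid decidable_cgsim

section \<open>Codes of regular expressions and formulas\<close>

lemma npair_ge1: "a \<le> npair a b"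
  by (simp add: npair_def le_prod_encode_1)

lemma npair_ge2: "b \<le> npair a b"
  by (simp add: npair_def le_prod_encode_2)

lemma npair_gt: "0 < k \<Longrightarrow> y < npair k y"
  using le_triangle[of "k + y"] by (simp add: npair_def prod_encode_def)

lemma npair_less_npair1: "a < c \<Longrightarrow> b \<le> d \<Longrightarrow> npair a b < npair c d"
  using triangle_mono[of "a + b" "c + d"] by (simp add: npair_def prod_encode_def)

lemma npair_less_npair2: "a \<le> c \<Longrightarrow> b < d \<Longrightarrow> npair a b < npair c d"
  using triangle_mono[of "Suc (a + b)" "c + d"] by (simp add: npair_def prod_encode_def)

lemma npair_fst_less: "0 < k \<Longrightarrow> a < npair k (npair a b)"
  using npair_ge1 npair_gt le_less_trans by blast

lemma npair_snd_less: "0 < k \<Longrightarrow> b < npair k (npair a b)"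
  using npair_ge2 npair_gt le_less_trans by blast

lemmas npair_less = npair_fst_less npair_snd_less npair_gt

lemma enc_rexp_npair:
  "enc_rexp RZero = npair 0 0" "enc_rexp ROne = npair 1 0" "enc_rexp (RAtom g) = npair 2 (list_encode g)"
  "enc_rexp (RTimes a b) = npair 3 (npair (enc_rexp a) (enc_rexp b))"
  "enc_rexp (RPlus a b) = npair 4 (npair (enc_rexp a) (enc_rexp b))"
  "enc_rexp (RStar a) = npair 5 (enc_rexp a)"
  by (simp_all add: npair_def)

lemma enc_form_npair:
  "enc_form Pi = npair 0 0" "enc_form (Prop p) = npair 1 p" "enc_form (Neg a) = npair 2 (enc_form a)"
  "enc_form (And a b) = npair 3 (npair (enc_form a) (enc_form b))"
  "enc_form (K i a) = npair 4 (npair i (enc_form a))"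
  "enc_form (C G a) = npair 5 (npair (list_encode G) (enc_form a))"
  "enc_form (DiaA a) = npair 6 (enc_form a)" "enc_form (DiaBbar a) = npair 7 (enc_form a)"
  "enc_form (DiaN a) = npair 8 (enc_form a)"
  by (simp_all add: npair_def)

lemma enc_rexp_inj: "enc_rexp a = enc_rexp b \<Longrightarrow> a = b"
  by (induction a arbitrary: b; case_tac b) (auto simp: enc_rexp_npair list_encode_eq)

lemma enc_form_inj: "enc_form a = enc_form b \<Longrightarrow> a = b"
  by (induction a arbitrary: b; case_tac b) (auto simp: enc_form_npair list_encode_eq)

lemma enc_rexp_less:
  "enc_rexp a < enc_rexp (RTimes a b)" "enc_rexp b < enc_rexp (RTimes a b)"
  "enc_rexp a < enc_rexp (RPlus a b)" "enc_rexp b < enc_rexp (RPlus a b)"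
  "enc_rexp a < enc_rexp (RStar a)"
  by (simp_all only: enc_rexp_npair npair_less zero_less_numeral)

lemma enc_form_less:
  "enc_form a < enc_form (Neg a)" "enc_form a < enc_form (And a b)" "enc_form b < enc_form (And a b)"
  "enc_form a < enc_form (K i a)" "enc_form a < enc_form (C G a)"
  "enc_form a < enc_form (DiaA a)" "enc_form a < enc_form (DiaBbar a)" "enc_form a < enc_form (DiaN a)"
  by (simp_all only: enc_form_npair npair_less zero_less_numeral)

definition dec_rexp :: "nat \<Rightarrow> nat list rexp" where "dec_rexp z = (SOME e. enc_rexp e = z)"

lemma dec_rexp_enc[simp]: "dec_rexp (enc_rexp e) = e"
  unfolding dec_rexp_def by (rule some_equality) (auto dest: enc_rexp_inj)

definition dec_form :: "nat \<Rightarrow> form" where "dec_form z = (SOME e. enc_form e = z)"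

lemma dec_form_enc[simp]: "dec_form (enc_form e) = e"
  unfolding dec_form_def by (rule some_equality) (auto dest: enc_form_inj)

section \<open>Computing \<open>fIS\<close>\<close>

definition rsize_step :: "nat \<Rightarrow> nat \<Rightarrow> nat \<Rightarrow> nat" where
  "rsize_step T e x = (if pfst e = 3 \<or> pfst e = 4 then cnth T (pfst (psnd e)) + cnth T (psnd (psnd e)) + 1
     else if pfst e = 5 then cnth T (psnd e) + 1 else 1)"

definition crsize :: "nat \<Rightarrow> nat" where "crsize e = cnth (cov_tab rsize_step e 0) e"

lemma crsize_correct: "crsize (enc_rexp e) = rsize e"
proof -
  have "cnth (cov_tab rsize_step (enc_rexp e) 0) z = rsize (dec_rexp z)"
    if "z \<in> range enc_rexp" "z \<le> enc_rexp e" for z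
  proof (rule cov_tab_correct[OF _ that])
    fix z T assume "z \<in> range enc_rexp"
      and T: "\<And>z'. z' \<in> range enc_rexp \<Longrightarrow> z' < z \<Longrightarrow> cnth T z' = rsize (dec_rexp z')"
    then obtain e' where z: "z = enc_rexp e'" by blast
    have "cnth T (enc_rexp a) = rsize a" if "enc_rexp a < enc_rexp e'" for a
      using T[of "enc_rexp a"] that z by simp
    then show "rsize_step T z 0 = rsize (dec_rexp z)"
      unfolding z dec_rexp_enc by (cases e') (simp_all add: rsize_step_def enc_rexp_npair npair_less del: enc_rexp.simps)
  qed
  then show ?thesis unfolding crsize_def by simp
qed

definition tops_step :: "nat \<Rightarrow> nat \<Rightarrow> nat \<Rightarrow> nat" where
  "tops_step T z y = (if pfst z = 2 then cnth T (psnd z)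
     else if pfst z = 3 then (if cnth T (pfst (psnd z)) \<noteq> 0 \<or> cnth T (psnd (psnd z)) \<noteq> 0 then 1 else 0)
     else if 4 \<le> pfst z \<and> pfst z \<le> 8 then (if y = z then 1 else 0) else 0)"

definition ctops_mem :: "nat \<Rightarrow> nat \<Rightarrow> nat" where "ctops_mem x y = cnth (cov_tab tops_step x y) x"

lemma ctops_mem_correct: "ctops_mem (enc_form \<phi>) y = (if y \<in> enc_form ` set (tops \<phi>) then 1 else 0)"
proof -
  let ?h = "\<lambda>z. if y \<in> enc_form ` set (tops (dec_form z)) then 1 else 0"
  have "cnth (cov_tab tops_step (enc_form \<phi>) y) z = ?h z" if "z \<in> range enc_form" "z \<le> enc_form \<phi>" for z
  proof (rule cov_tab_correct[OF _ that])
    fix z T assume "z \<in> range enc_form"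
      and T: "\<And>z'. z' \<in> range enc_form \<Longrightarrow> z' < z \<Longrightarrow> cnth T z' = ?h z'"
    then obtain \<psi> where z: "z = enc_form \<psi>" by blast
    have "cnth T (enc_form a) = ?h (enc_form a)" if "enc_form a < enc_form \<psi>" for a
      using T that z by simp
    then show "tops_step T z y = ?h z"
      unfolding z dec_form_enc by (cases \<psi>) (auto simp: tops_step_def enc_form_npair npair_less simp del: enc_form.simps)
  qed
  then show ?thesis unfolding ctops_mem_def by simp
qed

definition cmarg :: "nat \<Rightarrow> nat" where
  "cmarg y = (if pfst y = 4 \<or> pfst y = 5 then psnd (psnd y) else psnd y)"

definition ccard_gstates :: "nat \<Rightarrow> nat" where
  "ccard_gstates cis = (\<Prod>i<Suc (cnag cis). cnth (clocs cis) i)"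

definition cfbase :: "nat \<Rightarrow> nat" where
  "cfbase cis = 2 * ccard_gstates cis ^ 2 * (\<Prod>k<clen (clam cis). 2 ^ crsize (cnth (clam cis) k))"

definition fIS_step :: "nat \<Rightarrow> nat \<Rightarrow> nat \<Rightarrow> nat" where
  "fIS_step T x cis = cfbase cis * (\<Prod>y<Suc x. if ctops_mem x y \<noteq> 0 then 2 ^ cnth T (cmarg y) else 1)"

definition cfIS_tab :: "nat \<Rightarrow> nat \<Rightarrow> nat" where "cfIS_tab cis x = cov_tab fIS_step x cis"

lemma card_bounded_lists: "card {g. length g = length L \<and> (\<forall>i<length L. g ! i < L ! i)} = prod_list L"
proof (induction L)
  case Nil then show ?case by simp
next
  case (Cons a L)
  let ?S = "\<lambda>L. {g. length g = length L \<and> (\<forall>i<length L. g ! i < L ! i)}"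
  have eq: "?S (a # L) = (\<lambda>(x, g). x # g) ` ({..<a} \<times> ?S L)"
  proof (rule set_eqI, rule iffI)
    fix g assume "g \<in> ?S (a # L)"
    then have g0: "length g = Suc (length L)" "\<forall>i<Suc (length L). g ! i < (a # L) ! i" by auto
    then obtain x g' where gx: "g = x # g'" by (cases g) auto
    have "x < a" using g0 gx by auto
    moreover have "g' \<in> ?S L"
    proof -
      have "\<forall>i<length L. g' ! i < L ! i"
      proof (intro allI impI)
        fix i assume "i < length L"
        then have "g ! Suc i < (a # L) ! Suc i" using g0 by blast
        then show "g' ! i < L ! i" using gx by simp
      qed
      then show ?thesis using g0 gx by simp
    qed
    ultimately have g: "g = x # g'" "x < a" "g' \<in> ?S L" using gx by auto
    then show "g \<in> (\<lambda>(x, g). x # g) ` ({..<a} \<times> ?S L)" by force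
  next
    fix g assume "g \<in> (\<lambda>(x, g). x # g) ` ({..<a} \<times> ?S L)"
    then show "g \<in> ?S (a # L)" by (auto simp: nth_Cons split: nat.split)
  qed
  have "inj_on (\<lambda>(x, g). x # g) ({..<a} \<times> ?S L)" by (auto simp: inj_on_def)
  then have "card (?S (a # L)) = a * card (?S L)"
    unfolding eq by (simp add: card_image card_cartesian_product)
  then show ?case using Cons by simp
qed

lemma prod_list_eq_prod_nth: "prod_list xs = (\<Prod>i<length xs. xs ! i)"
  by (induction xs) (simp_all add: prod.lessThan_Suc_shift del: prod.lessThan_Suc)

lemma card_gstates: "wf_isrl IS \<Longrightarrow> card (gstates IS) = prod_list (locs IS)"
proof -
  assume wf: "wf_isrl IS"
  have "gstates IS = {g. length g = length (locs IS) \<and> (\<forall>i<length (locs IS). g ! i < locs IS ! i)}"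
    using wf by (auto simp: gstates_def wf_isrlD less_Suc_eq_le)
  then show ?thesis by (simp add: card_bounded_lists)
qed

lemma cfbase_correct: "wf_isrl IS \<Longrightarrow> cfbase (enc_isrl IS) = fbase IS"
proof -
  assume wf: "wf_isrl IS"
  have "ccard_gstates (enc_isrl IS) = card (gstates IS)"
    using wf by (simp add: ccard_gstates_def card_gstates prod_list_eq_prod_nth wf_isrlD)
  then show ?thesis by (simp add: cfbase_def fbase_def crsize_correct)
qed

lemma tops_enc_form:
  "\<chi> \<in> set (tops \<phi>) \<Longrightarrow>
   enc_form (marg \<chi>) < enc_form \<chi> \<and> enc_form \<chi> \<le> enc_form \<phi> \<and> cmarg (enc_form \<chi>) = enc_form (marg \<chi>)"
proof (induction \<phi> rule: tops.induct)
  case (3 a)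
  then show ?case using enc_form_less(1)[of a] by (auto simp del: enc_form.simps)
next
  case (4 a b)
  then show ?case using enc_form_less(2,3)[where a=a and b=b] by (auto simp del: enc_form.simps)
qed (auto simp: cmarg_def enc_form_npair npair_less simp del: enc_form.simps)

lemma fIS_step_correct:
  assumes wf: "wf_isrl IS"
    and T: "\<And>\<psi>. enc_form \<psi> < enc_form \<phi> \<Longrightarrow> cnth T (enc_form \<psi>) = fIS IS \<psi>"
  shows "fIS_step T (enc_form \<phi>) (enc_isrl IS) = fIS IS \<phi>"
proof -
  let ?S = "enc_form ` set (tops \<phi>)"
  let ?g = "\<lambda>y. (2::nat) ^ cnth T (cmarg y)"
  have "(\<Prod>y<Suc (enc_form \<phi>). if ctops_mem (enc_form \<phi>) y \<noteq> 0 then ?g y else 1) =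
      (\<Prod>y<Suc (enc_form \<phi>). if y \<in> ?S then ?g y else 1)"
    by (intro prod.cong refl) (simp add: ctops_mem_correct)
  also have "\<dots> = prod ?g ({..<Suc (enc_form \<phi>)} \<inter> ?S)" by (simp add: prod.inter_restrict)
  also have "{..<Suc (enc_form \<phi>)} \<inter> ?S = ?S" using tops_enc_form by (auto simp: less_Suc_eq_le)
  also have "prod ?g ?S = prod (?g \<circ> enc_form) (set (tops \<phi>))"
    by (rule prod.reindex) (auto simp: inj_on_def dest: enc_form_inj)
  also have "\<dots> = prod (\<lambda>\<chi>. 2 ^ fIS IS (marg \<chi>)) (set (tops \<phi>))"
  proof (rule prod.cong[OF refl])
    fix \<chi> assume "\<chi> \<in> set (tops \<phi>)"
    then have "enc_form (marg \<chi>) < enc_form \<phi>" "cmarg (enc_form \<chi>) = enc_form (marg \<chi>)"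
      using tops_enc_form[of \<chi> \<phi>] by auto
    then show "(?g \<circ> enc_form) \<chi> = 2 ^ fIS IS (marg \<chi>)" using T by simp
  qed
  also have "\<dots> = prod_list (map (\<lambda>\<chi>. 2 ^ fIS IS (marg \<chi>)) (remdups (tops \<phi>)))"
    by (rule prod.set_conv_list)
  finally show ?thesis unfolding fIS_step_def cfbase_correct[OF wf] fIS_eq[of IS \<phi>] by simp
qed

lemma cfIS_tab_correct:
  assumes wf: "wf_isrl IS" and "enc_form \<psi> \<le> x"
  shows "cnth (cfIS_tab (enc_isrl IS) x) (enc_form \<psi>) = fIS IS \<psi>"
proof -
  have "cnth (cov_tab fIS_step x (enc_isrl IS)) z = fIS IS (dec_form z)"
    if "z \<in> range enc_form" "z \<le> x" for z
  proof (rule cov_tab_correct[OF _ that])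
    fix z T assume "z \<in> range enc_form"
      and T: "\<And>z'. z' \<in> range enc_form \<Longrightarrow> z' < z \<Longrightarrow> cnth T z' = fIS IS (dec_form z')"
    then obtain \<phi> where "z = enc_form \<phi>" by blast
    then show "fIS_step T z (enc_isrl IS) = fIS IS (dec_form z)"
      using fIS_step_correct[OF wf, of \<phi> T] T by simp
  qed
  then show ?thesis using assms(2) unfolding cfIS_tab_def by simp
qed

lemma computable_rsize_step: "computable (\<lambda>p. rsize_step (pfst p) (pfst (psnd p)) (psnd (psnd p)))"
  unfolding rsize_step_def by (intro computable_isrl_intros)

lemma computable_crsize: "computable f \<Longrightarrow> computable (\<lambda>x. crsize (f x))"
  by (rule computable_comp[of crsize]) (unfold crsize_def,
      intro computable_cnth computable_cov_tab[OF computable_rsize_step] computable_id computable_const)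

lemma computable_tops_step: "computable (\<lambda>p. tops_step (pfst p) (pfst (psnd p)) (psnd (psnd p)))"
  unfolding tops_step_def by (intro computable_isrl_intros)

lemma computable_ctops_mem: "computable f \<Longrightarrow> computable g \<Longrightarrow> computable (\<lambda>x. ctops_mem (f x) (g x))"
  by (rule computable_lift2[of ctops_mem]) (unfold ctops_mem_def,
      intro computable_cnth computable_cov_tab[OF computable_tops_step] computable_isrl_intros)

lemma computable_fIS_step: "computable (\<lambda>p. fIS_step (pfst p) (pfst (psnd p)) (psnd (psnd p)))"
  unfolding fIS_step_def cfbase_def ccard_gstates_def cmarg_def cisrl_defs
  by (intro computable_isrl_intros computable_ctops_mem computable_crsize)

lemma computable_cfIS_tab: "computable f \<Longrightarrow> computable g \<Longrightarrow> computable (\<lambda>x. cfIS_tab (f x) (g x))"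
  by (rule computable_lift2[of cfIS_tab])
    (unfold cfIS_tab_def, intro computable_cov_tab[OF computable_fIS_step] computable_isrl_intros)

section \<open>Matching regular expressions\<close>

lemma ex_append_iff_take_drop:
  "(\<exists>u v. ws = u @ v \<and> P u v) \<longleftrightarrow> (\<exists>k\<le>length ws. P (take k ws) (drop k ws))"
  by (metis append_eq_conv_conj append_take_drop_id nat_le_linear take_all)

lemma ex_append_nonempty_iff_take_drop:
  "(\<exists>u v. u \<noteq> [] \<and> ws = u @ v \<and> P u v) \<longleftrightarrow> (\<exists>k<length ws. P (take (Suc k) ws) (drop (Suc k) ws))"
proof
  assume "\<exists>u v. u \<noteq> [] \<and> ws = u @ v \<and> P u v"
  then obtain u v where "u \<noteq> []" "ws = u @ v" "P u v" by blast
  then show "\<exists>k<length ws. P (take (Suc k) ws) (drop (Suc k) ws)"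
    by (intro exI[of _ "length u - 1"]) (cases u, auto)
next
  assume "\<exists>k<length ws. P (take (Suc k) ws) (drop (Suc k) ws)"
  then obtain k where "k < length ws" "P (take (Suc k) ws) (drop (Suc k) ws)" by blast
  then show "\<exists>u v. u \<noteq> [] \<and> ws = u @ v \<and> P u v"
    by (intro exI[of _ "take (Suc k) ws"] exI[of _ "drop (Suc k) ws"]) auto
qed

lemma lang_RTimes: "ws \<in> lang (RTimes a b) \<longleftrightarrow> (\<exists>k\<le>length ws. take k ws \<in> lang a \<and> drop k ws \<in> lang b)"
  using ex_append_iff_take_drop[of ws "\<lambda>u v. u \<in> lang a \<and> v \<in> lang b"] by auto

lemma lang_RStar_unfold:
  "ws \<in> lang (RStar e) \<longleftrightarrow> ws = [] \<or> (\<exists>u v. u \<noteq> [] \<and> ws = u @ v \<and> u \<in> lang e \<and> v \<in> lang (RStar e))"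
proof
  assume "ws \<in> lang (RStar e)"
  then obtain wss where ws: "ws = concat wss" "\<forall>w\<in>set wss. w \<in> lang e" by auto
  let ?f = "filter (\<lambda>w. w \<noteq> []) wss"
  have ws_f: "ws = concat ?f" using ws(1) by (induction wss arbitrary: ws) auto
  have f: "\<forall>w\<in>set ?f. w \<in> lang e \<and> w \<noteq> []" using ws(2) by simp
  show "ws = [] \<or> (\<exists>u v. u \<noteq> [] \<and> ws = u @ v \<and> u \<in> lang e \<and> v \<in> lang (RStar e))"
  proof (cases ?f)
    case (Cons u rest)
    then have "\<forall>w\<in>set (u # rest). w \<in> lang e \<and> w \<noteq> []" using f by (simp only:)
    then have u: "u \<noteq> []" "u \<in> lang e" and rest: "\<forall>w\<in>set rest. w \<in> lang e"
      by simp_all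
    from rest have "concat rest \<in> lang (RStar e)" by (simp only: lang.simps) blast
    then show ?thesis using ws_f Cons u by auto
  qed (use ws_f in simp)
next
  assume "ws = [] \<or> (\<exists>u v. u \<noteq> [] \<and> ws = u @ v \<and> u \<in> lang e \<and> v \<in> lang (RStar e))"
  then show "ws \<in> lang (RStar e)"
  proof
    assume "ws = []"
    then show ?thesis by (auto intro!: exI[of _ "[]"])
  next
    assume "\<exists>u v. u \<noteq> [] \<and> ws = u @ v \<and> u \<in> lang e \<and> v \<in> lang (RStar e)"
    then obtain u wss where "ws = concat (u # wss)" "\<forall>w\<in>set (u # wss). w \<in> lang e" by auto
    then show ?thesis by (simp only: lang.simps) blast
  qed
qed

lemma lang_RStar:
  "ws \<in> lang (RStar e) \<longleftrightarrow>
   ws = [] \<or> (\<exists>k<length ws. take (Suc k) ws \<in> lang e \<and> drop (Suc k) ws \<in> lang (RStar e))"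
  using lang_RStar_unfold[of ws e] ex_append_nonempty_iff_take_drop[of ws "\<lambda>u v. u \<in> lang e \<and> v \<in> lang (RStar e)"]
  by simp

lemma gcode_eq_iff[simp]: "gcode gs = gcode gs' \<longleftrightarrow> gs = gs'"
  by (simp add: gcode_def list_encode_eq inj_map_eq_map inj_list_encode)

lemma cdrop_gcode: "cdrop k (gcode gs) = gcode (drop k gs)"
  by (simp add: gcode_def drop_map)

lemma gcode_take_le: "gcode (take k gs) \<le> gcode gs"
proof (induction gs arbitrary: k)
  case (Cons g gs)
  then show ?case by (cases k) (auto simp: gcode_def prod_encode_mono)
qed simp

lemma gcode_drop_le: "gcode (drop k gs) \<le> gcode gs"
proof (induction gs arbitrary: k)
  case (Cons g gs)
  have "gcode gs \<le> gcode (g # gs)"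
    using le_prod_encode_2[of "gcode gs" "list_encode g"] by (simp add: gcode_def)
  then show ?case using Cons.IH by (cases k) (auto intro: le_trans)
qed simp

lemma gcode_drop_Suc_less: "gs \<noteq> [] \<Longrightarrow> gcode (drop (Suc k) gs) < gcode gs"
proof (cases gs)
  case (Cons g gs')
  then show ?thesis
    using gcode_drop_le[of k gs'] le_prod_encode_2[of "gcode gs'" "list_encode g"] by (simp add: gcode_def)
qed simp

text \<open>The table entry at \<open>npair e w\<close> decides whether the sequence coded by \<open>w\<close> matches the
  regular expression coded by \<open>e\<close>.\<close>
definition match_step :: "nat \<Rightarrow> nat \<Rightarrow> nat \<Rightarrow> nat" where
  "match_step T z x = (if pfst (pfst z) = 1 then (if psnd z = 0 then 1 else 0)
     else if pfst (pfst z) = 2 then (if psnd z = ccons (psnd (pfst z)) 0 then 1 else 0)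
     else if pfst (pfst z) = 3 then (if \<exists>k<Suc (clen (psnd z)).
          cnth T (npair (pfst (psnd (pfst z))) (ctake k (psnd z))) \<noteq> 0 \<and>
          cnth T (npair (psnd (psnd (pfst z))) (cdrop k (psnd z))) \<noteq> 0 then 1 else 0)
     else if pfst (pfst z) = 4 then (if cnth T (npair (pfst (psnd (pfst z))) (psnd z)) \<noteq> 0 \<or>
          cnth T (npair (psnd (psnd (pfst z))) (psnd z)) \<noteq> 0 then 1 else 0)
     else if pfst (pfst z) = 5 then (if psnd z = 0 \<or> (\<exists>k<clen (psnd z).
          cnth T (npair (psnd (pfst z)) (ctake (Suc k) (psnd z))) \<noteq> 0 \<and>
          cnth T (npair (pfst z) (cdrop (Suc k) (psnd z))) \<noteq> 0) then 1 else 0)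
     else 0)"

definition cmatch :: "nat \<Rightarrow> nat \<Rightarrow> nat" where
  "cmatch e w = cnth (cov_tab match_step (npair e w) 0) (npair e w)"

lemma ccons_list_encode_0: "ccons (list_encode g) 0 = gcode [g]"
  by (simp add: gcode_def ccons_def npair_def)

lemma match_step_simps:
  "match_step T (npair (npair 0 0) w) x = 0"
  "match_step T (npair (npair 1 0) w) x = (if w = 0 then 1 else 0)"
  "match_step T (npair (npair 2 g) w) x = (if w = ccons g 0 then 1 else 0)"
  "match_step T (npair (npair 3 (npair a b)) w) x = (if \<exists>k<Suc (clen w).
      cnth T (npair a (ctake k w)) \<noteq> 0 \<and> cnth T (npair b (cdrop k w)) \<noteq> 0 then 1 else 0)"
  "match_step T (npair (npair 4 (npair a b)) w) x =
    (if cnth T (npair a w) \<noteq> 0 \<or> cnth T (npair b w) \<noteq> 0 then 1 else 0)"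
  "match_step T (npair (npair 5 a) w) x = (if w = 0 \<or> (\<exists>k<clen w.
      cnth T (npair a (ctake (Suc k) w)) \<noteq> 0 \<and> cnth T (npair (npair 5 a) (cdrop (Suc k) w)) \<noteq> 0)
    then 1 else 0)"
  by (simp_all add: match_step_def)

lemma match_step_correct:
  assumes T: "\<And>a us. npair (enc_rexp a) (gcode us) < npair (enc_rexp e) (gcode gs) \<Longrightarrow>
      cnth T (npair (enc_rexp a) (gcode us)) = (if us \<in> lang a then 1 else 0)"
  shows "match_step T (npair (enc_rexp e) (gcode gs)) x = (if gs \<in> lang e then 1 else 0)"
proof (cases e)
  case (RTimes a b)
  have "cnth T (npair (enc_rexp a) (ctake k (gcode gs))) \<noteq> 0 \<longleftrightarrow> take k gs \<in> lang a"
    if "k \<le> length gs" for k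
    using that T[of a "take k gs"] RTimes enc_rexp_less gcode_take_le[of k gs]
    by (simp add: ctake_gcode npair_less_npair1)
  moreover have "cnth T (npair (enc_rexp b) (cdrop k (gcode gs))) \<noteq> 0 \<longleftrightarrow> drop k gs \<in> lang b" for k
    using T[of b "drop k gs"] RTimes enc_rexp_less gcode_drop_le[of k gs]
    by (simp add: cdrop_gcode npair_less_npair1)
  ultimately have "(\<exists>k<Suc (clen (gcode gs)). cnth T (npair (enc_rexp a) (ctake k (gcode gs))) \<noteq> 0 \<and>
      cnth T (npair (enc_rexp b) (cdrop k (gcode gs))) \<noteq> 0) \<longleftrightarrow> gs \<in> lang (RTimes a b)"
    by (auto simp: lang_RTimes less_Suc_eq_le simp del: lang.simps)
  then show ?thesis using RTimes by (simp only: enc_rexp_npair match_step_simps; simp)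
next
  case (RPlus a b)
  then have "cnth T (npair (enc_rexp a) (gcode gs)) \<noteq> 0 \<or> cnth T (npair (enc_rexp b) (gcode gs)) \<noteq> 0
      \<longleftrightarrow> gs \<in> lang (RPlus a b)"
    using T[of a gs] T[of b gs] enc_rexp_less by (simp add: npair_less_npair1)
  then show ?thesis using RPlus by (simp only: enc_rexp_npair match_step_simps; simp)
next
  case (RStar a)
  have "cnth T (npair (enc_rexp a) (ctake (Suc k) (gcode gs))) \<noteq> 0 \<longleftrightarrow> take (Suc k) gs \<in> lang a"
    if "k < length gs" for k
    using that T[of a "take (Suc k) gs"] RStar enc_rexp_less gcode_take_le[of "Suc k" gs]
    by (simp add: ctake_gcode npair_less_npair1)
  moreover have "cnth T (npair (enc_rexp e) (cdrop (Suc k) (gcode gs))) \<noteq> 0 \<longleftrightarrow>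
      drop (Suc k) gs \<in> lang e" if "k < length gs" for k
  proof -
    have "gcode (drop (Suc k) gs) < gcode gs" using that by (intro gcode_drop_Suc_less) auto
    then show ?thesis using T[of e "drop (Suc k) gs"] by (simp add: cdrop_gcode npair_less_npair2)
  qed
  ultimately have "(gcode gs = 0 \<or> (\<exists>k<clen (gcode gs).
      cnth T (npair (enc_rexp a) (ctake (Suc k) (gcode gs))) \<noteq> 0 \<and>
      cnth T (npair (enc_rexp e) (cdrop (Suc k) (gcode gs))) \<noteq> 0)) \<longleftrightarrow> gs \<in> lang e"
    using lang_RStar[of gs a] RStar by (auto simp del: lang.simps enc_rexp.simps)
  then show ?thesis using RStar by (simp only: enc_rexp_npair match_step_simps; simp)
next
  case ROne
  then show ?thesis by (simp add: match_step_def enc_rexp_npair del: enc_rexp.simps)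
qed (simp_all add: enc_rexp_npair match_step_simps ccons_list_encode_0 del: enc_rexp.simps)

lemma cmatch_correct: "cmatch (enc_rexp e) (gcode gs) = (if gs \<in> lang e then 1 else 0)"
proof -
  let ?G = "{npair (enc_rexp e) (gcode gs) | e gs. True}"
  let ?h = "\<lambda>z. if gdecode (psnd z) \<in> lang (dec_rexp (pfst z)) then 1 else 0"
  have "cnth (cov_tab match_step (npair (enc_rexp e) (gcode gs)) 0) z = ?h z"
    if "z \<in> ?G" "z \<le> npair (enc_rexp e) (gcode gs)" for z
  proof (rule cov_tab_correct[OF _ that])
    fix z T assume "z \<in> ?G" and T: "\<And>z'. z' \<in> ?G \<Longrightarrow> z' < z \<Longrightarrow> cnth T z' = ?h z'"
    then obtain e' gs' where z: "z = npair (enc_rexp e') (gcode gs')" by blast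
    have "cnth T (npair (enc_rexp a) (gcode us)) = (if us \<in> lang a then 1 else 0)"
      if "npair (enc_rexp a) (gcode us) < npair (enc_rexp e') (gcode gs')" for a us
    proof -
      have "npair (enc_rexp a) (gcode us) \<in> ?G" by blast
      then show ?thesis using T[of "npair (enc_rexp a) (gcode us)"] that z by simp
    qed
    from match_step_correct[OF this] show "match_step T z 0 = ?h z" by (simp add: z)
  qed
  moreover have "npair (enc_rexp e) (gcode gs) \<in> ?G" by blast
  ultimately show ?thesis unfolding cmatch_def by simp
qed

lemma computable_match_step: "computable (\<lambda>p. match_step (pfst p) (pfst (psnd p)) (psnd (psnd p)))"
  unfolding match_step_def by (intro computable_isrl_intros)

lemma computable_cmatch: "computable f \<Longrightarrow> computable g \<Longrightarrow> computable (\<lambda>x. cmatch (f x) (g x))"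
  by (rule computable_lift2[of cmatch]) (unfold cmatch_def,
      intro computable_cnth computable_cov_tab[OF computable_match_step] computable_isrl_intros)

section \<open>The satisfaction table\<close>

definition clookup :: "nat \<Rightarrow> nat \<Rightarrow> nat \<Rightarrow> nat" where "clookup T a c = cnth (cnth T a) c"

text \<open>The entry for the formula coded by \<open>x\<close> at the sequence coded by \<open>c\<close>, computed from the
  rows \<open>T\<close> of its sub-formulas; \<open>cis\<close> codes the system, quantifiers range over codes up to \<open>B\<close>,
  and \<open>FT\<close> tabulates \<open>fIS\<close>.\<close>
definition sat_entry :: "nat \<Rightarrow> nat \<Rightarrow> nat \<Rightarrow> nat \<Rightarrow> nat \<Rightarrow> nat \<Rightarrow> nat" where
  "sat_entry T x c cis B FT =
    (if pfst x = 0 then (if clen c = 1 then 1 else 0)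
     else if pfst x = 1 then cmatch (cnth (clam cis) (psnd x)) c
     else if pfst x = 2 then (if clookup T (psnd x) c = 0 then 1 else 0)
     else if pfst x = 3 then
       (if clookup T (pfst (psnd x)) c \<noteq> 0 \<and> clookup T (psnd (psnd x)) c \<noteq> 0 then 1 else 0)
     else if pfst x = 4 then (if \<forall>c'<Suc B. cgsim cis (pfst (psnd x)) c c' \<longrightarrow>
         clookup T (psnd (psnd x)) c' \<noteq> 0 then 1 else 0)
     else if pfst x = 5 then (if \<forall>c'<Suc B. (\<exists>p<Suc (path_code_bound B). cpath (\<lambda>u v. u \<le> B \<and> v \<le> B \<and>
         (\<exists>k<clen (pfst (psnd x)). cgsim cis (cnth (pfst (psnd x)) k) u v)) p c c') \<longrightarrow>
         clookup T (psnd (psnd x)) c' \<noteq> 0 then 1 else 0)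
     else if pfst x = 6 then (if c \<noteq> 0 \<and> (\<exists>c'<Suc B. cgvalid cis c' \<and> clen c' \<le> clen c + cnth FT (psnd x) \<and>
         cnth c' 0 = clast c \<and> clookup T (psnd x) c' \<noteq> 0) then 1 else 0)
     else if pfst x = 7 then (if c \<noteq> 0 \<and> (\<exists>c'<Suc B. cgvalid cis c' \<and> clen c' \<le> clen c + cnth FT (psnd x) \<and>
         clen c < clen c' \<and> ctake (clen c) c' = c \<and> clookup T (psnd x) c' \<noteq> 0) then 1 else 0)
     else if pfst x = 8 then (if c \<noteq> 0 \<and> (\<exists>c'<Suc B. cgvalid cis c' \<and> clen c' \<le> clen c + cnth FT (psnd x) \<and>
         ctG cis (clast c) (cnth c' 0) \<and> clookup T (psnd x) c' \<noteq> 0) then 1 else 0)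
     else 0)"

definition sat_step :: "nat \<Rightarrow> nat \<Rightarrow> nat \<Rightarrow> nat" where
  "sat_step T x q = ctab (\<lambda>c. sat_entry T x c (pfst q) (pfst (psnd q)) (psnd (psnd q))) (Suc (pfst (psnd q)))"

definition sat_row :: "isrl \<Rightarrow> nat \<Rightarrow> nat \<Rightarrow> nat" where
  "sat_row IS B z = ctab (\<lambda>c. if gsat_bounded IS B (dec_form z) (gdecode c) then 1 else 0) (Suc B)"

lemma all_less_Suc_gcode: "(\<forall>c<Suc B. P c) \<longleftrightarrow> (\<forall>gs. gcode gs \<le> B \<longrightarrow> P (gcode gs))"
  by (metis gcode_gdecode less_Suc_eq_le)

lemma ex_less_Suc_gcode: "(\<exists>c<Suc B. P c) \<longleftrightarrow> (\<exists>gs. gcode gs \<le> B \<and> P (gcode gs))"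
  by (metis gcode_gdecode less_Suc_eq_le)

lemma sat_entry_simps:
  "sat_entry T (enc_form Pi) c cis B FT = (if clen c = 1 then 1 else 0)"
  "sat_entry T (enc_form (Prop p)) c cis B FT = cmatch (cnth (clam cis) p) c"
  "sat_entry T (enc_form (Neg a)) c cis B FT = (if clookup T (enc_form a) c = 0 then 1 else 0)"
  "sat_entry T (enc_form (And a b)) c cis B FT =
    (if clookup T (enc_form a) c \<noteq> 0 \<and> clookup T (enc_form b) c \<noteq> 0 then 1 else 0)"
  "sat_entry T (enc_form (K i a)) c cis B FT =
    (if \<forall>c'<Suc B. cgsim cis i c c' \<longrightarrow> clookup T (enc_form a) c' \<noteq> 0 then 1 else 0)"
  "sat_entry T (enc_form (C G a)) c cis B FT =
    (if \<forall>c'<Suc B. (\<exists>p<Suc (path_code_bound B). cpath (\<lambda>u v. u \<le> B \<and> v \<le> B \<and>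
        (\<exists>k<clen (list_encode G). cgsim cis (cnth (list_encode G) k) u v)) p c c') \<longrightarrow>
      clookup T (enc_form a) c' \<noteq> 0 then 1 else 0)"
  "sat_entry T (enc_form (DiaA a)) c cis B FT =
    (if c \<noteq> 0 \<and> (\<exists>c'<Suc B. cgvalid cis c' \<and> clen c' \<le> clen c + cnth FT (enc_form a) \<and>
      cnth c' 0 = clast c \<and> clookup T (enc_form a) c' \<noteq> 0) then 1 else 0)"
  "sat_entry T (enc_form (DiaBbar a)) c cis B FT =
    (if c \<noteq> 0 \<and> (\<exists>c'<Suc B. cgvalid cis c' \<and> clen c' \<le> clen c + cnth FT (enc_form a) \<and>
      clen c < clen c' \<and> ctake (clen c) c' = c \<and> clookup T (enc_form a) c' \<noteq> 0) then 1 else 0)"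
  "sat_entry T (enc_form (DiaN a)) c cis B FT =
    (if c \<noteq> 0 \<and> (\<exists>c'<Suc B. cgvalid cis c' \<and> clen c' \<le> clen c + cnth FT (enc_form a) \<and>
      ctG cis (clast c) (cnth c' 0) \<and> clookup T (enc_form a) c' \<noteq> 0) then 1 else 0)"
  by (simp_all add: sat_entry_def enc_form_npair del: enc_form.simps)

lemma cgsim_tranclp_correct:
  assumes wf: "wf_isrl IS" and G: "\<forall>i\<in>set G. i \<le> nag IS"
  shows "(\<exists>p<Suc (path_code_bound B). cpath (\<lambda>u v. u \<le> B \<and> v \<le> B \<and>
      (\<exists>k<clen (list_encode G). cgsim (enc_isrl IS) (cnth (list_encode G) k) u v)) p (gcode gs) (gcode gs'))
    \<longleftrightarrow> (\<lambda>x y. gcode x \<le> B \<and> gcode y \<le> B \<and> (\<exists>i\<in>set G. gsim IS i x y))\<^sup>+\<^sup>+ gs gs'"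
    (is "(\<exists>p<_. cpath ?rc p _ _) \<longleftrightarrow> ?r\<^sup>+\<^sup>+ gs gs'")
proof -
  have "?rc u v \<longleftrightarrow> ?r (gdecode u) (gdecode v)" for u v
  proof -
    have "(\<exists>k<clen (list_encode G). cgsim (enc_isrl IS) (cnth (list_encode G) k) u v) \<longleftrightarrow>
        (\<exists>i\<in>set G. cgsim (enc_isrl IS) i u v)"
      by (rule ex_less_clen_list_encode)
    then show ?thesis using cgsim_correct[OF wf, of _ "gdecode u" "gdecode v"] G by auto
  qed
  then have "?rc\<^sup>+\<^sup>+ (gcode gs) (gcode gs') \<longleftrightarrow> ?r\<^sup>+\<^sup>+ gs gs'"
    by (intro tranclp_transfer[where d = gdecode]) simp_all
  then show ?thesis using tranclp_iff_cpath[of ?rc B] by (simp add: less_Suc_eq_le)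
qed

lemma sat_entry_DiaA_correct:
  assumes wf: "wf_isrl IS" and "gs \<noteq> []" and FT: "cnth FT (enc_form a) = fIS IS a"
    and T: "\<And>gs'. gcode gs' \<le> B \<Longrightarrow> clookup T (enc_form a) (gcode gs') \<noteq> 0 \<longleftrightarrow> gsat_bounded IS B a gs'"
  shows "(\<exists>c'<Suc B. cgvalid (enc_isrl IS) c' \<and> clen c' \<le> clen (gcode gs) + cnth FT (enc_form a) \<and>
      cnth c' 0 = clast (gcode gs) \<and> clookup T (enc_form a) c' \<noteq> 0) \<longleftrightarrow>
    (\<exists>gs'. gcode gs' \<le> B \<and> gvalid IS gs' \<and> length gs' \<le> length gs + fIS IS a \<and>
      hd gs' = last gs \<and> gsat_bounded IS B a gs')"
proof -
  have "cgvalid (enc_isrl IS) (gcode gs') \<and> clen (gcode gs') \<le> clen (gcode gs) + cnth FT (enc_form a) \<and>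
      cnth (gcode gs') 0 = clast (gcode gs) \<and> clookup T (enc_form a) (gcode gs') \<noteq> 0 \<longleftrightarrow>
    gvalid IS gs' \<and> length gs' \<le> length gs + fIS IS a \<and> hd gs' = last gs \<and> gsat_bounded IS B a gs'"
    if "gcode gs' \<le> B" for gs'
  proof (cases "gvalid IS gs'")
    case True
    then have "gs' \<noteq> []" by (simp add: gvalid_def)
    then show ?thesis using True that T FT assms(2)
      by (simp add: cgvalid_correct[OF wf] cnth_gcode_0 clast_gcode list_encode_eq)
  qed (simp add: cgvalid_correct[OF wf])
  then show ?thesis unfolding ex_less_Suc_gcode by blast
qed

lemma sat_entry_DiaBbar_correct:
  assumes wf: "wf_isrl IS" and FT: "cnth FT (enc_form a) = fIS IS a"
    and T: "\<And>gs'. gcode gs' \<le> B \<Longrightarrow> clookup T (enc_form a) (gcode gs') \<noteq> 0 \<longleftrightarrow> gsat_bounded IS B a gs'"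
  shows "(\<exists>c'<Suc B. cgvalid (enc_isrl IS) c' \<and> clen c' \<le> clen (gcode gs) + cnth FT (enc_form a) \<and>
      clen (gcode gs) < clen c' \<and> ctake (clen (gcode gs)) c' = gcode gs \<and> clookup T (enc_form a) c' \<noteq> 0) \<longleftrightarrow>
    (\<exists>gs'. gcode gs' \<le> B \<and> gvalid IS gs' \<and> length gs' \<le> length gs + fIS IS a \<and>
      length gs < length gs' \<and> take (length gs) gs' = gs \<and> gsat_bounded IS B a gs')"
proof -
  have "cgvalid (enc_isrl IS) (gcode gs') \<and> clen (gcode gs') \<le> clen (gcode gs) + cnth FT (enc_form a) \<and>
      clen (gcode gs) < clen (gcode gs') \<and> ctake (clen (gcode gs)) (gcode gs') = gcode gs \<and>
      clookup T (enc_form a) (gcode gs') \<noteq> 0 \<longleftrightarrow>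
    gvalid IS gs' \<and> length gs' \<le> length gs + fIS IS a \<and> length gs < length gs' \<and>
      take (length gs) gs' = gs \<and> gsat_bounded IS B a gs'"
    if "gcode gs' \<le> B" for gs'
  proof (cases "length gs < length gs'")
    case True
    then show ?thesis using that T FT by (simp add: cgvalid_correct[OF wf] ctake_gcode)
  qed simp
  then show ?thesis unfolding ex_less_Suc_gcode by blast
qed

lemma sat_entry_DiaN_correct:
  assumes wf: "wf_isrl IS" and "gs \<noteq> []" and FT: "cnth FT (enc_form a) = fIS IS a"
    and T: "\<And>gs'. gcode gs' \<le> B \<Longrightarrow> clookup T (enc_form a) (gcode gs') \<noteq> 0 \<longleftrightarrow> gsat_bounded IS B a gs'"
  shows "(\<exists>c'<Suc B. cgvalid (enc_isrl IS) c' \<and> clen c' \<le> clen (gcode gs) + cnth FT (enc_form a) \<and>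
      ctG (enc_isrl IS) (clast (gcode gs)) (cnth c' 0) \<and> clookup T (enc_form a) c' \<noteq> 0) \<longleftrightarrow>
    (\<exists>gs'. gcode gs' \<le> B \<and> gvalid IS gs' \<and> length gs' \<le> length gs + fIS IS a \<and>
      tG IS (last gs) (hd gs') \<and> gsat_bounded IS B a gs')"
proof -
  have "cgvalid (enc_isrl IS) (gcode gs') \<and> clen (gcode gs') \<le> clen (gcode gs) + cnth FT (enc_form a) \<and>
      ctG (enc_isrl IS) (clast (gcode gs)) (cnth (gcode gs') 0) \<and> clookup T (enc_form a) (gcode gs') \<noteq> 0 \<longleftrightarrow>
    gvalid IS gs' \<and> length gs' \<le> length gs + fIS IS a \<and> tG IS (last gs) (hd gs') \<and> gsat_bounded IS B a gs'"
    if "gcode gs' \<le> B" for gs'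
  proof (cases "gvalid IS gs'")
    case True
    then have "gs' \<noteq> []" by (simp add: gvalid_def)
    then show ?thesis using True that T FT assms(2)
      by (simp add: cgvalid_correct[OF wf] cnth_gcode_0 clast_gcode ctG_correct[OF wf])
  qed (simp add: cgvalid_correct[OF wf])
  then show ?thesis unfolding ex_less_Suc_gcode by blast
qed

lemma sat_entry_correct:
  assumes wf: "wf_isrl IS" and wfp: "wf_form IS \<phi>" and gs: "gcode gs \<le> B"
    and FT: "\<And>\<psi>. enc_form \<psi> < enc_form \<phi> \<Longrightarrow> cnth FT (enc_form \<psi>) = fIS IS \<psi>"
    and T: "\<And>\<psi> gs'. wf_form IS \<psi> \<Longrightarrow> enc_form \<psi> < enc_form \<phi> \<Longrightarrow> gcode gs' \<le> B \<Longrightarrow>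
      clookup T (enc_form \<psi>) (gcode gs') \<noteq> 0 \<longleftrightarrow> gsat_bounded IS B \<psi> gs'"
  shows "sat_entry T (enc_form \<phi>) (gcode gs) (enc_isrl IS) B FT = (if gsat_bounded IS B \<phi> gs then 1 else 0)"
proof (cases \<phi>)
  case (Prop p)
  then have "cnth (clam (enc_isrl IS)) p = enc_rexp (lam IS ! p)" using wfp by simp
  then show ?thesis using Prop by (simp add: sat_entry_simps cmatch_correct del: enc_form.simps)
next
  case (Neg a)
  then show ?thesis using T[of a gs] wfp gs enc_form_less by (auto simp: sat_entry_simps simp del: enc_form.simps)
next
  case (And a b)
  then show ?thesis using T[of a gs] T[of b gs] wfp gs enc_form_less
    by (simp add: sat_entry_simps del: enc_form.simps)
next
  case (K i a)
  then have "i \<le> nag IS" "wf_form IS a" "enc_form a < enc_form \<phi>" using wfp enc_form_less by auto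
  then show ?thesis using K T[of a]
    by (simp add: sat_entry_simps all_less_Suc_gcode cgsim_correct[OF wf] del: enc_form.simps)
next
  case (C G a)
  then have G: "\<forall>i\<in>set G. i \<le> nag IS" and "wf_form IS a" "enc_form a < enc_form \<phi>"
    using wfp enc_form_less by auto
  then show ?thesis using C T[of a] cgsim_tranclp_correct[OF wf G, of B gs]
    by (simp add: sat_entry_simps all_less_Suc_gcode del: enc_form.simps)
next
  case (DiaA a)
  then have a: "wf_form IS a" "enc_form a < enc_form \<phi>" using wfp enc_form_less by auto
  show ?thesis using DiaA sat_entry_DiaA_correct[OF wf _ FT[OF a(2)] T[OF a]]
    by (cases "gs = []") (simp_all add: sat_entry_simps del: enc_form.simps)
next
  case (DiaBbar a)
  then have a: "wf_form IS a" "enc_form a < enc_form \<phi>" using wfp enc_form_less by auto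
  show ?thesis using DiaBbar sat_entry_DiaBbar_correct[OF wf FT[OF a(2)] T[OF a]]
    by (cases "gs = []") (simp_all add: sat_entry_simps del: enc_form.simps)
next
  case (DiaN a)
  then have a: "wf_form IS a" "enc_form a < enc_form \<phi>" using wfp enc_form_less by auto
  show ?thesis using DiaN sat_entry_DiaN_correct[OF wf _ FT[OF a(2)] T[OF a]]
    by (cases "gs = []") (simp_all add: sat_entry_simps del: enc_form.simps)
qed (simp add: sat_entry_simps del: enc_form.simps)

lemma sat_step_correct:
  assumes wf: "wf_isrl IS" and wfp: "wf_form IS \<phi>" and "enc_form \<phi> \<le> X"
    and T: "\<And>\<psi>. wf_form IS \<psi> \<Longrightarrow> enc_form \<psi> < enc_form \<phi> \<Longrightarrow> cnth T (enc_form \<psi>) = sat_row IS B (enc_form \<psi>)"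
  shows "sat_step T (enc_form \<phi>) (npair (enc_isrl IS) (npair B (cfIS_tab (enc_isrl IS) X))) =
    sat_row IS B (enc_form \<phi>)"
proof -
  have "sat_entry T (enc_form \<phi>) c (enc_isrl IS) B (cfIS_tab (enc_isrl IS) X) =
      (if gsat_bounded IS B \<phi> (gdecode c) then 1 else 0)" if "c < Suc B" for c
  proof -
    have "gcode (gdecode c) \<le> B" using that by simp
    moreover have "clookup T (enc_form \<psi>) (gcode gs') \<noteq> 0 \<longleftrightarrow> gsat_bounded IS B \<psi> gs'"
      if "wf_form IS \<psi>" "enc_form \<psi> < enc_form \<phi>" "gcode gs' \<le> B" for \<psi> gs'
      using T[OF that(1,2)] that(3) by (simp add: clookup_def sat_row_def del: ctab_eq_list_encode)
    moreover have "cnth (cfIS_tab (enc_isrl IS) X) (enc_form \<psi>) = fIS IS \<psi>"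
      if "enc_form \<psi> < enc_form \<phi>" for \<psi>
      using cfIS_tab_correct[OF wf] that \<open>enc_form \<phi> \<le> X\<close> by simp
    ultimately show ?thesis using sat_entry_correct[OF wf wfp] by (metis gcode_gdecode)
  qed
  then show ?thesis unfolding sat_step_def sat_row_def
    by (simp del: ctab_eq_list_encode add: ctab_def)
qed

lemma sat_tab_correct:
  assumes wf: "wf_isrl IS" and wfp: "wf_form IS \<phi>" and "enc_form \<phi> \<le> X"
  shows "cnth (cov_tab sat_step X (npair (enc_isrl IS) (npair B (cfIS_tab (enc_isrl IS) X)))) (enc_form \<phi>) =
    sat_row IS B (enc_form \<phi>)"
proof -
  let ?G = "{enc_form \<psi> | \<psi>. wf_form IS \<psi>}"
  have "cnth (cov_tab sat_step X (npair (enc_isrl IS) (npair B (cfIS_tab (enc_isrl IS) X)))) z = sat_row IS B z"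
    if "z \<in> ?G" "z \<le> X" for z
  proof (rule cov_tab_correct[OF _ that])
    fix z T assume "z \<in> ?G" "z \<le> X" and T: "\<And>z'. z' \<in> ?G \<Longrightarrow> z' < z \<Longrightarrow> cnth T z' = sat_row IS B z'"
    then obtain \<psi> where "z = enc_form \<psi>" "wf_form IS \<psi>" by blast
    then show "sat_step T z (npair (enc_isrl IS) (npair B (cfIS_tab (enc_isrl IS) X))) = sat_row IS B z"
      using \<open>z \<le> X\<close> T by (auto intro!: sat_step_correct[OF wf])
  qed
  then show ?thesis using assms by blast
qed

lemma computable_sat_step: "computable (\<lambda>p. sat_step (pfst p) (pfst (psnd p)) (psnd (psnd p)))"
  unfolding sat_step_def sat_entry_def clookup_def cpath_def clam_def
  by (intro computable_isrl_intros computable_cmatch)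

section \<open>The decision procedure\<close>

lemma lookahead_le_sum_fIS:
  assumes t: "\<And>\<psi>. enc_form \<psi> \<le> X \<Longrightarrow> t (enc_form \<psi>) = fIS IS \<psi>"
  shows "enc_form \<phi> \<le> X \<Longrightarrow> lookahead IS \<phi> \<le> (\<Sum>y<enc_form \<phi>. t y)"
proof (induction \<phi>)
  have sub: "lookahead IS a \<le> (\<Sum>y<n. t y)"
    if "enc_form a < n" "n \<le> X" "enc_form a \<le> X \<Longrightarrow> lookahead IS a \<le> (\<Sum>y<enc_form a. t y)" for a n
  proof -
    have "(\<Sum>y<enc_form a. t y) \<le> (\<Sum>y<n. t y)" using that(1) by (intro sum_mono2) auto
    then show ?thesis using that by simp
  qed
  have dia: "fIS IS a + lookahead IS a \<le> (\<Sum>y<n. t y)"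
    if "enc_form a < n" "n \<le> X" "enc_form a \<le> X \<Longrightarrow> lookahead IS a \<le> (\<Sum>y<enc_form a. t y)" for a n
  proof -
    have "fIS IS a + lookahead IS a \<le> (\<Sum>y<Suc (enc_form a). t y)" using that t[of a] by simp
    also have "\<dots> \<le> (\<Sum>y<n. t y)" using that(1) by (intro sum_mono2) auto
    finally show ?thesis .
  qed
  {
    case (Neg a) then show ?case using sub[OF enc_form_less(1)] by simp
  next
    case (And a b) then show ?case using sub[OF enc_form_less(2)] sub[OF enc_form_less(3)] by simp
  next
    case (K i a) then show ?case using sub[OF enc_form_less(4)] by simp
  next
    case (C G a) then show ?case using sub[OF enc_form_less(5)] by simp
  next
    case (DiaA a) then show ?case using dia[OF enc_form_less(6)] by simp
  next
    case (DiaBbar a) then show ?case using dia[OF enc_form_less(7)] by simp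
  next
    case (DiaN a) then show ?case using dia[OF enc_form_less(8)] by simp
  }
qed simp_all

definition cgseq :: "nat \<Rightarrow> nat" where "cgseq x = ctab (\<lambda>j. clast (cnth x j)) (clen x)"

text \<open>The quantifiers of the table range up to the code of a sequence of length
  \<open>|I| + (\<Sum>y<enc_form \<phi>. fIS)\<close> whose entries all are the largest code of a global state; every
  sequence consulted in the evaluation of \<open>\<phi>\<close> has a smaller code.\<close>
definition decide_satB :: "nat \<Rightarrow> nat" where
  "decide_satB x = (let cis = cnth x 0; f = cnth x 1; c = cgseq (cnth x 2); FT = cfIS_tab cis f;
     B = ctab (\<lambda>j. cgstate_bound cis) (clen c + (\<Sum>y<f. cnth FT y))
   in clookup (cov_tab sat_step f (npair cis (npair B FT))) f c)"

lemma computable_decide_satB: "computable decide_satB"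
  unfolding decide_satB_def[abs_def] Let_def cgseq_def clookup_def
  by (intro computable_cov_tab[OF computable_sat_step] computable_isrl_intros computable_cfIS_tab)

lemma cnth_enc_inst:
  "cnth (enc_inst IS \<phi> I) 0 = enc_isrl IS" "cnth (enc_inst IS \<phi> I) 1 = enc_form \<phi>"
  "cnth (enc_inst IS \<phi> I) 2 = enc_interval I"
  by (simp_all add: enc_inst_def del: list_encode.simps)

lemma cgseq_enc_interval:
  assumes "isInterval IS I"
  shows "cgseq (enc_interval I) = gcode (gseq I)"
proof -
  have "enc_list list_encode = gcode" by (simp add: fun_eq_iff enc_list_def gcode_def)
  then have enc: "enc_interval I = list_encode (map gcode I)"
    by (simp add: enc_interval_def enc_list_def)
  have "I ! j \<noteq> []" if "j < length I" for j
    using assms that by (auto simp: isInterval_def isState_def)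
  then have "map (\<lambda>j. clast (cnth (enc_interval I) j)) [0..<length I] = map list_encode (map last I)"
    by (intro nth_equalityI) (auto simp: enc clast_gcode)
  then show ?thesis by (simp add: cgseq_def enc gcode_def gseq_def)
qed

lemma decide_satB_correct:
  assumes wf: "wf_isrl IS" and wfp: "wf_form IS \<phi>" and I: "isInterval IS I"
  shows "decide_satB (enc_inst IS \<phi> I) = (if satB IS I \<phi> then 1 else 0)"
proof -
  let ?c = "enc_isrl IS"
  let ?FT = "cfIS_tab ?c (enc_form \<phi>)"
  let ?L = "length I + (\<Sum>y<enc_form \<phi>. cnth ?FT y)"
  let ?B = "ctab (\<lambda>j. cgstate_bound ?c) ?L"
  have "lookahead IS \<phi> \<le> (\<Sum>y<enc_form \<phi>. cnth ?FT y)"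
    by (rule lookahead_le_sum_fIS) (auto intro: cfIS_tab_correct[OF wf])
  then have bound: "gcode gs' \<le> ?B" if "gvalid IS gs'" "length gs' \<le> length I + lookahead IS \<phi>" for gs'
    using that gvalid_gstates[OF wf] gstates_code_le[OF wf]
    by (auto simp: gcode_def map_replicate_const in_set_conv_nth intro!: list_encode_le_replicate)
  have v: "gvalid IS (gseq I)" using I by (rule interval_gvalid)
  have "decide_satB (enc_inst IS \<phi> I) = cnth (sat_row IS ?B (enc_form \<phi>)) (gcode (gseq I))"
    unfolding decide_satB_def cnth_enc_inst cgseq_enc_interval[OF I] Let_def clookup_def
    using sat_tab_correct[OF wf wfp order_refl, of ?B] by simp
  also have "\<dots> = (if gsat_bounded IS ?B \<phi> (gseq I) then 1 else 0)"
    using bound[OF v] by (simp add: sat_row_def less_Suc_eq_le del: ctab_eq_list_encode)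
  also have "gsat_bounded IS ?B \<phi> (gseq I) = gsat IS \<phi> (gseq I)"
    using v bound by (intro gsat_bounded_eq_gsat) auto
  also have "\<dots> = satB IS I \<phi>" using satB_eq_gsat[OF I] by simp
  finally show ?thesis .
qed

theorem mainTheorem6:
  shows "\<exists>f :: recf. \<forall>IS \<phi> I.
           wf_isrl IS \<and> wf_form IS \<phi> \<and> isInterval IS I \<longrightarrow>
           evals f [enc_inst IS \<phi> I] (if satB IS I \<phi> then 1 else 0)"
proof -
  obtain P where P: "\<And>x. peval P [x] = decide_satB x"
    using computable_decide_satB unfolding computable_def by blast
  have "evals (compile 1 P) [x] (decide_satB x)" for x
    using evals_compile[of "[x]" 1 P] P by simp
  then show ?thesis using decide_satB_correct by metis
qed

end
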